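(* (1) For all $k=1,\dots,K$ and $m=1,\dots,M$, the random variables $H_k^r(m)^2-1$ and $H_k^i(m)^2-1$ are sub-exponential and $$\|H_k^r(m)^2-1\|_{\psi},\ \|H_k^i(m)^2-1\|_{\psi}\le2\sigma_F^2.$$ (2) For every $s^K=(s_1,\dots,s_K)\in\mathcal{S}_1\times\dots\times\mathcal{S}_K$ and every $m=1,\dots,M$, the random variable $\bar N_{s^K}(m)$ is sub-exponential and $$\|\bar N_{s^K}(m)-\mathbb{E}(\bar N_{s^K}(m))\|_\psi\le6\sigma_F^2\Delta(f\|P)+8\sigma_N\sigma_F\sqrt{\Delta(f\|P)}+4\sigma_N^2.$$
   Context: Norms: for a real random variable $X$, the sub-gaussian norm is $\tau(X):=\inf\{t>0:\forall\lambda\in\mathbb{R},\ \mathbb{E}\exp(\lambda(X-\mathbb{E}X))\le\exp(\lambda^2t^2/2)\}$ and the sub-exponential norm is $\|X\|_\psi:=\sup_{k\ge1}\left(\mathbb{E}(|X|^k)/k!\right)^{1/k}$; $X$ is sub-exponential if $\|X\|_\psi<\infty$. Random variables: fix $K,M\in\mathbb{N}$, $P>0$, $\sigma_F,\sigma_N\ge0$. $H_k(m)$ ($k\le K$, $m\le M$) are independent complex random variables whose real parts $H_k^r(m)$ and imaginary parts $H_k^i(m)$ are independent sub-gaussian with mean $0$, variance $1$, and $\max(\tau(H_k^r(m)),\tau(H_k^i(m)))\le\sigma_F$. $N(m)$ ($m\le M$) are independent complex random variables whose real and imaginary parts $N^r(m),N^i(m)$ are independent sub-gaussian with mean $0$ and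 $\max(\tau(N^r(m)),\tau(N^i(m)))\le\sigma_N$. All $N(m)$, $H_k(m)$ are jointly independent. $U_k(m)$ ($k\le K$, $m\le M$) are i.i.d. uniform on $\{-1,+1\}$, independent of all $H_k(m)$ and $N(m)$. Function data: $\mathcal{S}_1,\dots,\mathcal{S}_K\subseteq\mathbb{R}$ are closed sets and $f_k:\mathcal{S}_k\to\mathbb{R}$ are bounded measurable functions (the inner functions of $f$). Let $\phi_{\min,k}=\inf_{s\in\mathcal{S}_k}f_k(s)$, $\phi_{\max,k}=\sup_{s\in\mathcal{S}_k}f_k(s)$, $\bar\Delta(f)=\sum_{k=1}^K(\phi_{\max,k}-\phi_{\min,k})$, $\Delta(f)=\max_k(\phi_{\max,k}-\phi_{\min,k})$ (assumed positive), and the relative spread $\Delta(f\|P)=P\,\bar\Delta(f)/\Delta(f)$. Define $g_k:[\phi_{\min,k},\phi_{\max,k}]\to[0,P]$ by $g_k(t)=\frac{P}{\Delta(f)}(t-\phi_{\min,k})$. For $s^K=(s_1,\dots,s_K)$ and $m=1,\dots,M$ define $$\bar N_{s^K}(m):=\sum_{\substack{k,l=1\\k\ne l}}^K\sqrt{g_k(f_k(s_k))g_l(f_l(s_l))}\,H_k(m)\overline{H_l(m)}\,U_k(m)U_l(m)+2\,\mathrm{Re}\Big(\overline{N(m)}\sum_{k=1}^K\sqrt{g_k(f_k(s_k))}\,H_k(m)U_k(m)\Big)+|N(m)|^2.$$ *)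

theory Defs
  imports "HOL-Probability.Probability"
begin

definition subgauss_set :: "'a measure \<Rightarrow> ('a \<Rightarrow> real) \<Rightarrow> real set" where
  "subgauss_set Q X = {t. t > 0 \<and> (\<forall>l::real.
      integrable Q (\<lambda>x. exp (l * (X x - integral\<^sup>L Q X))) \<and>
      integral\<^sup>L Q (\<lambda>x. exp (l * (X x - integral\<^sup>L Q X))) \<le> exp (l\<^sup>2 * t\<^sup>2 / 2))}"

definition subgaussian :: "'a measure \<Rightarrow> ('a \<Rightarrow> real) \<Rightarrow> bool" where
  "subgaussian Q X \<longleftrightarrow> X \<in> borel_measurable Q \<and> subgauss_set Q X \<noteq> {}"

text \<open>Sub-gaussian norm tau(X) (meaningful when subgaussian Q X).\<close>
definition subgauss_norm :: "'a measure \<Rightarrow> ('a \<Rightarrow> real) \<Rightarrow> real" where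
  "subgauss_norm Q X = Inf (subgauss_set Q X)"

definition subexp_norm :: "'a measure \<Rightarrow> ('a \<Rightarrow> real) \<Rightarrow> ereal" where
  "subexp_norm Q X = (SUP k\<in>{1::nat..}.
      (if integrable Q (\<lambda>x. \<bar>X x\<bar> ^ k)
       then ereal ((integral\<^sup>L Q (\<lambda>x. \<bar>X x\<bar> ^ k) / fact k) powr (1 / real k))
       else \<infinity>))"

definition subexponential :: "'a measure \<Rightarrow> ('a \<Rightarrow> real) \<Rightarrow> bool" where
  "subexponential Q X \<longleftrightarrow> X \<in> borel_measurable Q \<and> subexp_norm Q X < \<infinity>"

definition phi_min :: "(nat \<Rightarrow> real set) \<Rightarrow> (nat \<Rightarrow> real \<Rightarrow> real) \<Rightarrow> nat \<Rightarrow> real" where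
  "phi_min S f k = Inf (f k ` S k)"

definition phi_max :: "(nat \<Rightarrow> real set) \<Rightarrow> (nat \<Rightarrow> real \<Rightarrow> real) \<Rightarrow> nat \<Rightarrow> real" where
  "phi_max S f k = Sup (f k ` S k)"

definition Delta_bar :: "nat \<Rightarrow> (nat \<Rightarrow> real set) \<Rightarrow> (nat \<Rightarrow> real \<Rightarrow> real) \<Rightarrow> real" where
  "Delta_bar K S f = (\<Sum>k=1..K. phi_max S f k - phi_min S f k)"

definition Delta :: "nat \<Rightarrow> (nat \<Rightarrow> real set) \<Rightarrow> (nat \<Rightarrow> real \<Rightarrow> real) \<Rightarrow> real" where
  "Delta K S f = Max ((\<lambda>k. phi_max S f k - phi_min S f k) ` {1..K})"

definition rel_spread :: "nat \<Rightarrow> (nat \<Rightarrow> real set) \<Rightarrow> (nat \<Rightarrow> real \<Rightarrow> real) \<Rightarrow> real \<Rightarrow> real" where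
  "rel_spread K S f P = P * Delta_bar K S f / Delta K S f"

definition gfun :: "nat \<Rightarrow> (nat \<Rightarrow> real set) \<Rightarrow> (nat \<Rightarrow> real \<Rightarrow> real) \<Rightarrow> real \<Rightarrow> nat \<Rightarrow> real \<Rightarrow> real" where
  "gfun K S f P k t = P / Delta K S f * (t - phi_min S f k)"

definition Hc :: "(nat \<Rightarrow> nat \<Rightarrow> 'a \<Rightarrow> real) \<Rightarrow> (nat \<Rightarrow> nat \<Rightarrow> 'a \<Rightarrow> real) \<Rightarrow> nat \<Rightarrow> nat \<Rightarrow> 'a \<Rightarrow> complex" where
  "Hc Hr Hi k m x = Complex (Hr k m x) (Hi k m x)"

definition Nc :: "(nat \<Rightarrow> 'a \<Rightarrow> real) \<Rightarrow> (nat \<Rightarrow> 'a \<Rightarrow> real) \<Rightarrow> nat \<Rightarrow> 'a \<Rightarrow> complex" where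
  "Nc Nr Ni m x = Complex (Nr m x) (Ni m x)"

text \<open>The effective noise bar N_{s^K}(m) (complex-valued as in the paper; it is in fact real).\<close>
definition Nbar :: "nat \<Rightarrow> (nat \<Rightarrow> real set) \<Rightarrow> (nat \<Rightarrow> real \<Rightarrow> real) \<Rightarrow> real \<Rightarrow>
    (nat \<Rightarrow> nat \<Rightarrow> 'a \<Rightarrow> real) \<Rightarrow> (nat \<Rightarrow> nat \<Rightarrow> 'a \<Rightarrow> real) \<Rightarrow>
    (nat \<Rightarrow> 'a \<Rightarrow> real) \<Rightarrow> (nat \<Rightarrow> 'a \<Rightarrow> real) \<Rightarrow> (nat \<Rightarrow> nat \<Rightarrow> 'a \<Rightarrow> real) \<Rightarrow>
    (nat \<Rightarrow> real) \<Rightarrow> nat \<Rightarrow> 'a \<Rightarrow> complex" where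
  "Nbar K S f P Hr Hi Nr Ni U s m x =
     (\<Sum>k\<in>{1..K}. \<Sum>l\<in>{1..K}-{k}.
        complex_of_real (sqrt (gfun K S f P k (f k (s k)) * gfun K S f P l (f l (s l))))
        * Hc Hr Hi k m x * cnj (Hc Hr Hi l m x) * complex_of_real (U k m x * U l m x))
   + complex_of_real (2 * Re (cnj (Nc Nr Ni m x) *
        (\<Sum>k=1..K. complex_of_real (sqrt (gfun K S f P k (f k (s k)))) * Hc Hr Hi k m x
                     * complex_of_real (U k m x))))
   + complex_of_real ((cmod (Nc Nr Ni m x))\<^sup>2)"

datatype rv_idx = IHr nat nat | IHi nat nat | INr nat | INi nat | IU nat nat

fun rv_family :: "(nat \<Rightarrow> nat \<Rightarrow> 'a \<Rightarrow> real) \<Rightarrow> (nat \<Rightarrow> nat \<Rightarrow> 'a \<Rightarrow> real) \<Rightarrow>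
    (nat \<Rightarrow> 'a \<Rightarrow> real) \<Rightarrow> (nat \<Rightarrow> 'a \<Rightarrow> real) \<Rightarrow> (nat \<Rightarrow> nat \<Rightarrow> 'a \<Rightarrow> real) \<Rightarrow>
    rv_idx \<Rightarrow> 'a \<Rightarrow> real" where
  "rv_family Hr Hi Nr Ni U (IHr k m) = Hr k m"
| "rv_family Hr Hi Nr Ni U (IHi k m) = Hi k m"
| "rv_family Hr Hi Nr Ni U (INr m) = Nr m"
| "rv_family Hr Hi Nr Ni U (INi m) = Ni m"
| "rv_family Hr Hi Nr Ni U (IU k m) = U k m"

definition rv_index :: "nat \<Rightarrow> nat \<Rightarrow> rv_idx set" where
  "rv_index K M = {IHr k m | k m. k \<in> {1..K} \<and> m \<in> {1..M}}
     \<union> {IHi k m | k m. k \<in> {1..K} \<and> m \<in> {1..M}}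
     \<union> {INr m | m. m \<in> {1..M}} \<union> {INi m | m. m \<in> {1..M}}
     \<union> {IU k m | k m. k \<in> {1..K} \<and> m \<in> {1..M}}"

end

theory Submission
  imports Defs
begin

(* Write a centred sub-gaussian W through its mgf, E exp (l W) \<le> exp (l\<^sup>2 t\<^sup>2 / 2) for every
   t above its norm, and a sub-exponential X through its moments, E |X|^q \<le> q! c^q.
   Averaging exp (y W) over a Gaussian y gives E exp (\<theta> W\<^sup>2) \<le> (1 - 2 \<theta> t\<^sup>2)^(-1/2); together
   with u^q \<le> C_q (e^u - 1) and a Stirling-type lower bound on q! this yields
   E W^(2q) + t^(2q) \<le> q! (2 t\<^sup>2)^q, hence \<parallel>W\<^sup>2 - E W\<^sup>2\<parallel>_\<psi> \<le> 2 t\<^sup>2, which is part (1).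

   For part (2), Re N_s(m) is the sum of a real and an imaginary half, each of the form
   (N + Z)\<^sup>2 - \<Sum>k. (d_k Y_k)\<^sup>2 with Z = \<Sum>k. d_k Y_k, d_k = sqrt (g_k (f_k (s_k))) and independent
   Y_k = U_k H_k, which inherit the mgf bound of H_k because U_k is an independent sign.
   After centering, a half is the off-diagonal chaos Z\<^sup>2 - \<Sum>k. (d_k Y_k)\<^sup>2 (norm \<le> 3 t\<^sup>2 G),
   plus 2 N Z (\<le> 4 \<nu> t sqrt G, by AM-GM) plus N\<^sup>2 - E N\<^sup>2 (\<le> 2 \<nu>\<^sup>2), where G = \<Sum>k. d_k\<^sup>2 is at
   most \<Delta>(f\<parallel>P); the moment bounds are subadditive by convexity of x^q. Letting t \<down> \<sigma>F and
   \<nu> \<down> \<sigma>N gives the constants 6, 8 and 4. *)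

section \<open>Elementary inequalities\<close>

lemma pow_mult_exp_neg_le:
  fixes u :: real assumes u: "u \<ge> 0"
  shows "u ^ p * exp (- u) \<le> (real p / exp 1) ^ p"
proof (cases "p = 0 \<or> u = 0")
  case True then show ?thesis using u by (auto simp: power_0_left)
next
  case False
  then have p: "p > 0" and u': "u > 0" using u by auto
  have "ln (u / p) \<le> u / p - 1" using u' p by (intro ln_le_minus_one) auto
  then have "p * ln (u / p) \<le> p * (u / p - 1)" using p by (intro mult_left_mono) auto
  moreover have "p * ln (u / p) = p * ln u - p * ln p" using u' p by (simp add: ln_div algebra_simps)
  moreover have "p * (u / p - 1) = u - p" using p by (simp add: field_simps)
  ultimately have "exp (p * ln u - u) \<le> exp (p * ln p - p)" by simp
  moreover have "exp (p * ln u - u) = u ^ p * exp (- u)"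
    using u' by (simp add: exp_diff exp_minus exp_of_nat_mult field_simps)
  moreover have "exp (p * ln p - p) = (real p / exp 1) ^ p"
  proof -
    have "exp (p * ln p) = real p ^ p" using p by (simp add: exp_of_nat_mult)
    moreover have "exp (real p) = exp 1 ^ p" by (simp add: exp_of_nat_mult[symmetric])
    ultimately show ?thesis by (simp add: exp_diff power_divide)
  qed
  ultimately show ?thesis by simp
qed

definition pow_expm1_const :: "nat \<Rightarrow> real" where
  "pow_expm1_const q = (real q / exp 1) ^ q + (real (q - 1) / exp 1) ^ (q - 1)"

lemma pow_le_pow_expm1_const:
  fixes u :: real assumes u: "u \<ge> 0" and q: "q \<ge> 1"
  shows "u ^ q \<le> pow_expm1_const q * (exp u - 1)"
proof (cases "u = 0")
  case True then show ?thesis using q by (simp add: power_0_left)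
next
  case False
  let ?C = "pow_expm1_const q"
  have A: "(u ^ (q - 1) + u ^ q) * exp (- u) \<le> ?C"
    unfolding pow_expm1_const_def using pow_mult_exp_neg_le[OF u, of q] pow_mult_exp_neg_le[OF u, of "q - 1"]
    by (simp add: algebra_simps)
  have uq: "u ^ q = u * u ^ (q - 1)" using q by (simp add: power_eq_if)
  have B: "u * exp u \<le> (1 + u) * (exp u - 1)"
    using exp_ge_add_one_self[of u] by (simp add: algebra_simps)
  have C: "?C \<ge> 0" unfolding pow_expm1_const_def by simp
  have "u ^ q * (1 + u) * exp (- u) \<le> u * ?C"
    using mult_left_mono[OF A, of u] u by (simp add: uq algebra_simps)
  then have "u ^ q * (1 + u) \<le> u * ?C * exp u"
    by (simp add: exp_minus field_simps)
  also have "\<dots> \<le> ?C * ((1 + u) * (exp u - 1))"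
    using mult_left_mono[OF B C] by (simp add: algebra_simps)
  finally have "u ^ q * (1 + u) \<le> ?C * (exp u - 1) * (1 + u)" by (simp add: algebra_simps)
  then show ?thesis using u by simp
qed

lemma pow_expm1_const_le:
  assumes q: "q \<ge> 2"
  shows "pow_expm1_const q \<le> (real q / exp 1) ^ q * (real q / (real q - 1))"
proof -
  have q1: "real q - 1 > 0" using q by simp
  have "(1 - 1 / real q) \<le> exp (- 1 / real q)" using exp_ge_add_one_self[of "-1 / real q"] by simp
  then have "(1 - 1 / real q) ^ q \<le> exp (- 1 / real q) ^ q"
    using q by (intro power_mono) (auto simp: field_simps)
  also have "\<dots> = exp (-1)" using q by (simp add: exp_of_nat_mult[symmetric])
  finally have P: "(1 - 1 / real q) ^ q \<le> exp (-1)" .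
  have Q1: "real (q - 1) = real q - 1" using q by simp
  have "(real (q - 1) / exp 1) ^ (q - 1) * (real q - 1) = (real q - 1) ^ q / exp 1 ^ (q - 1)"
    using q Q1 by (simp add: power_divide power_eq_if[of "real q - 1" q] split: if_splits)
  also have "(real q - 1) ^ q = real q ^ q * (1 - 1 / real q) ^ q"
    using q by (simp add: power_mult_distrib[symmetric] field_simps)
  also have "exp 1 ^ (q - 1) = exp (1::real) ^ q / exp 1"
    using q by (cases q) (auto simp: field_simps)
  finally have "(real (q - 1) / exp 1) ^ (q - 1) * (real q - 1)
      = real q ^ q / exp 1 ^ q * ((1 - 1 / real q) ^ q * exp 1)"
    by (simp add: field_simps)
  also have "\<dots> \<le> real q ^ q / exp 1 ^ q * (exp (-1) * exp 1)"
    using P by (intro mult_left_mono mult_right_mono) auto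
  also have "\<dots> = (real q / exp 1) ^ q" by (simp add: power_divide exp_minus)
  finally have "(real (q - 1) / exp 1) ^ (q - 1) \<le> (real q / exp 1) ^ q / (real q - 1)"
    using q1 by (simp add: field_simps)
  then have "pow_expm1_const q \<le> (real q / exp 1) ^ q + (real q / exp 1) ^ q / (real q - 1)"
    unfolding pow_expm1_const_def by simp
  also have "\<dots> = (real q / exp 1) ^ q * (real q / (real q - 1))"
    using q1 by (simp add: field_simps)
  finally show ?thesis .
qed

text \<open>Holds because the derivative \<open>ln x + 1\<close> of \<open>x ln x\<close> is concave.\<close>
lemma xlnx_increment_le:
  fixes m :: real assumes m: "m \<ge> 1"
  shows "(m + 1/2) * ln (m + 1/2) - (m - 1/2) * ln (m - 1/2) \<le> ln m + 1"
proof -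
  define h where "h \<tau> = (m + \<tau>) * ln (m + \<tau>) - (m - \<tau>) * ln (m - \<tau>) - 2 * \<tau> * (ln m + 1)" for \<tau>
  have "h (1/2) \<le> h 0"
  proof (rule DERIV_nonpos_imp_nonincreasing[of 0 "1/2" h])
    fix x :: real assume x: "0 \<le> x" "x \<le> 1/2"
    have p: "m + x > 0" "m - x > 0" using m x by auto
    have d: "(h has_real_derivative (ln (m + x) + ln (m - x) - 2 * ln m)) (at x)"
      unfolding h_def[abs_def] using p by (auto intro!: derivative_eq_intros)
    have "ln (m + x) + ln (m - x) = ln ((m + x) * (m - x))" using p by (simp add: ln_mult)
    also have "\<dots> \<le> ln (m * m)"
      using p x by (subst ln_le_cancel_iff) (auto simp: algebra_simps intro: mult_strict_mono)
    also have "\<dots> = 2 * ln m" using m by (simp add: ln_mult)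
    finally show "\<exists>y. (h has_real_derivative y) (at x) \<and> y \<le> 0" using d by auto
  qed simp
  then show ?thesis by (simp add: h_def)
qed

lemma ln_fact_ge:
  "ln (fact q) \<ge> (real q + 1/2) * ln (real q + 1/2) - real q + ln 2 / 2"
proof (induction q)
  case 0
  have "(1/2::real) * ln (1/2) + ln 2 / 2 = 0" by (simp add: ln_div)
  then show ?case by simp
next
  case (Suc q)
  from xlnx_increment_le[of "real q + 1"]
  have "(real q + 3/2) * ln (real q + 3/2) - (real q + 1/2) * ln (real q + 1/2) \<le> ln (real q + 1) + 1"
    by (simp add: algebra_simps)
  moreover have "ln (fact (Suc q)) = ln (real q + 1) + ln (fact q)"
    by (simp add: ln_mult add.commute)
  ultimately show ?case using Suc.IH by (simp add: algebra_simps)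
qed

lemma fact_ge_Stirling:
  "fact q \<ge> ((real q + 1/2) / exp 1) ^ q * sqrt (2 * real q + 1)"
proof -
  define x where "x = real q + 1/2"
  have x: "x > 0" by (simp add: x_def)
  have "exp (x * ln x - real q + ln 2 / 2) \<le> exp (ln (fact q))"
    unfolding x_def exp_le_cancel_iff by (rule ln_fact_ge)
  then have A: "exp (x * ln x - real q + ln 2 / 2) \<le> fact q" by simp
  have "exp (x * ln x - real q + ln 2 / 2)
      = exp (real q * ln x) * exp (ln x / 2) * exp (ln 2 / 2) / exp (real q)"
    by (simp add: x_def exp_add exp_diff algebra_simps add_divide_distrib)
  also have "exp (real q * ln x) = x ^ q" using x by (simp add: exp_of_nat_mult)
  also have "exp (ln x / 2) = sqrt x" using x by (simp add: powr_half_sqrt[symmetric] powr_def)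
  also have "exp (ln 2 / 2) = sqrt 2" by (simp add: powr_half_sqrt[symmetric] powr_def)
  also have "exp (real q) = exp 1 ^ q" by (simp add: exp_of_nat_mult[symmetric])
  finally have "exp (x * ln x - real q + ln 2 / 2) = (x / exp 1) ^ q * sqrt (2 * x)"
    by (simp add: power_divide real_sqrt_mult)
  then show ?thesis using A by (simp add: x_def)
qed

lemma gauss_moment_ratio_two:
  "(1 / (3/5)) ^ 2 * pow_expm1_const 2 * (1 / sqrt (1 - 3/5) - 1) + 1 / 2 ^ 2 \<le> (fact 2 :: real)"
proof -
  have e: "exp (1::real) \<ge> 27/10" using e_approx_32 unfolding abs_le_iff by simp
  have C: "pow_expm1_const 2 \<le> 670 / 729"
  proof -
    have "(2 / exp 1) ^ 2 \<le> (2 / (27/10) :: real) ^ 2" using e by (intro power_mono divide_left_mono) auto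
    moreover have "1 / exp 1 \<le> 1 / (27/10 :: real)" using e by (intro divide_left_mono) auto
    ultimately show ?thesis unfolding pow_expm1_const_def by (simp add: power2_eq_square)
  qed
  have S: "1 / sqrt (1 - 3/5 :: real) \<le> 159/100"
  proof -
    have "(100/159 :: real) \<le> sqrt (2/5)" by (rule real_le_rsqrt) (simp add: power2_eq_square)
    then show ?thesis by (simp add: field_simps)
  qed
  have "1 / sqrt (1 - 3/5 :: real) - 1 \<ge> 0" by (simp add: field_simps)
  then have "(1 / (3/5)) ^ 2 * pow_expm1_const 2 * (1 / sqrt (1 - 3/5) - 1)
      \<le> (25/9) * (670/729) * (159/100 - 1 :: real)"
    using C S by (intro mult_mono) (auto simp: pow_expm1_const_def power2_eq_square)
  then show ?thesis by simp
qed

lemma gauss_moment_ratio_ge_three: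
  assumes q: "q \<ge> 3"
  defines "r \<equiv> 2 * real q / (2 * real q + 1)"
  shows "(1 / r) ^ q * pow_expm1_const q * (1 / sqrt (1 - r) - 1) + 1 / 2 ^ q \<le> fact q"
proof -
  have q3: "real q \<ge> 3" using q by simp
  define \<Phi> where "\<Phi> = ((real q + 1/2) / exp 1) ^ q"
  define y where "y = sqrt (2 * real q + 1)"
  have r1: "1 / r = 1 + 1 / (2 * real q)" using q by (simp add: r_def field_simps)
  have r2: "1 / sqrt (1 - r) = y"
  proof -
    have "1 - r = 1 / (2 * real q + 1)" by (simp add: r_def field_simps)
    then show ?thesis by (simp add: y_def real_sqrt_divide)
  qed
  have y1: "y \<ge> 1" by (simp add: y_def)
  have \<Phi>_eq: "(1 + 1 / (2 * real q)) ^ q * (real q / exp 1) ^ q = \<Phi>"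
  proof -
    have "(1 + 1 / (2 * real q)) * (real q / exp 1) = (real q + 1/2) / exp 1"
      using q3 by (simp add: field_simps)
    then show ?thesis unfolding \<Phi>_def by (simp add: power_mult_distrib[symmetric])
  qed
  have \<Phi>1: "\<Phi> \<ge> 1"
  proof -
    have "(real q + 1/2) / exp 1 \<ge> 1" using q3 e_less_272 by (simp add: field_simps)
    then show ?thesis unfolding \<Phi>_def by (rule one_le_power)
  qed
  have yb: "y \<le> (7 * real q + 1) / 8"
  proof -
    have "2 * real q + 1 \<le> ((7 * real q + 1) / 8)\<^sup>2"
      using q3 by (simp add: power2_eq_square field_simps) (use mult_right_mono[OF q3, of "real q"] in linarith)
    then show ?thesis unfolding y_def using q3 by (intro real_le_lsqrt) auto
  qed
  have "(1 / r) ^ q * pow_expm1_const q * (y - 1)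
      \<le> (1 + 1 / (2 * real q)) ^ q * ((real q / exp 1) ^ q * (real q / (real q - 1))) * (y - 1)"
    unfolding r1 using pow_expm1_const_le[of q] q y1 by (intro mult_right_mono mult_left_mono) auto
  also have "\<dots> = \<Phi> * (real q / (real q - 1)) * (y - 1)" using \<Phi>_eq by (simp add: algebra_simps)
  also have "\<dots> = \<Phi> * y - \<Phi> * (1 - (y - 1) / (real q - 1))"
    using q3 by (simp add: field_simps)
  also have "\<dots> \<le> \<Phi> * y - 1/8"
  proof -
    have "(y - 1) / (real q - 1) \<le> 7/8" using yb q3 by (simp add: field_simps)
    then have "\<Phi> * (1/8) \<le> \<Phi> * (1 - (y - 1) / (real q - 1))" using \<Phi>1 by (intro mult_left_mono) auto
    then show ?thesis using \<Phi>1 by linarith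
  qed
  also have "\<dots> \<le> fact q - 1 / 2 ^ q"
  proof -
    have "(2::real) ^ 3 \<le> 2 ^ q" using q by (intro power_increasing) auto
    then have "1 / 2 ^ q \<le> (1/8 :: real)" by (simp add: field_simps)
    moreover have "\<Phi> * y \<le> fact q" using fact_ge_Stirling[of q] by (simp add: \<Phi>_def y_def)
    ultimately show ?thesis by linarith
  qed
  finally show ?thesis unfolding r2 by simp
qed

text \<open>The numerical inequality behind \<open>E W\<^bsup>2q\<^esup> + t\<^bsup>2q\<^esup> \<le> q! (2 t\<^sup>2)\<^sup>q\<close>, with \<open>r = 2 \<theta> t\<^sup>2\<close>
  in the Gaussian trick below.\<close>
lemma exists_gauss_moment_ratio:
  assumes q: "q \<ge> 2"
  obtains r :: real where "0 < r" "r < 1"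
    "(1 / r) ^ q * pow_expm1_const q * (1 / sqrt (1 - r) - 1) + 1 / 2 ^ q \<le> fact q"
proof (cases "q = 2")
  case True
  then show ?thesis using gauss_moment_ratio_two by (intro that[of "3/5"]) auto
next
  case False
  then show ?thesis using gauss_moment_ratio_ge_three[of q] q by (intro that[of "2 * real q / (2 * real q + 1)"]) auto
qed

lemma sq_le_exp_plus_exp_uminus: "(x::real)\<^sup>2 \<le> exp x + exp (- x) - 2"
proof -
  have s: "(\<lambda>n. if even n then x ^ n /\<^sub>R fact n else 0) sums cosh x" by (rule cosh_converges)
  have "(\<Sum>n<3. if even n then x ^ n /\<^sub>R fact n else 0) \<le> (\<Sum>n. if even n then x ^ n /\<^sub>R fact n else 0)"
    using s by (intro sum_le_suminf) (auto simp: sums_iff zero_le_even_power)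
  moreover have "(\<Sum>n<3. if even n then x ^ n /\<^sub>R fact n else 0) = 1 + x\<^sup>2 / 2"
    by (simp add: eval_nat_numeral)
  ultimately show ?thesis using s by (simp add: sums_iff cosh_field_def)
qed

lemma expm1_le_mult_exp: "a \<ge> 0 \<Longrightarrow> exp a - 1 \<le> a * exp (a::real)"
  using mult_right_mono[OF exp_ge_add_one_self[of "- a"], of "exp a"] by (simp add: exp_minus field_simps)

lemma abs_diff_pow_le_add_pow:
  fixes a b :: real assumes "0 \<le> a" "0 \<le> b"
  shows "\<bar>a - b\<bar> ^ q \<le> a ^ q + b ^ q"
proof (cases "b \<le> a")
  case True
  then have "\<bar>a - b\<bar> ^ q \<le> a ^ q" using assms by (intro power_mono) auto
  then show ?thesis using assms by (simp add: add_increasing2)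
next
  case False
  then have "\<bar>a - b\<bar> ^ q \<le> b ^ q" using assms by (intro power_mono) auto
  then show ?thesis using assms by (simp add: add_increasing)
qed

lemma two_mult_pow_le_pow:
  fixes a b :: real assumes a: "0 \<le> a" and ab: "3 * a \<le> 2 * b" and q: "q \<ge> 2"
  shows "2 * a ^ q \<le> b ^ q"
  using q
proof (induction q rule: dec_induct)
  case base
  have "2 * a\<^sup>2 \<le> (3 * a / 2)\<^sup>2" by (simp add: power2_eq_square)
  also have "\<dots> \<le> b\<^sup>2" using a ab by (intro power_mono) auto
  finally show ?case by (simp add: power2_eq_square)
next
  case (step n)
  have "2 * a ^ Suc n = a * (2 * a ^ n)" by simp
  also have "\<dots> \<le> b * b ^ n" using a ab step.IH by (intro mult_mono) auto
  finally show ?case by simp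
qed

lemma convex_on_power_nonneg: "convex_on {0::real..} (\<lambda>x. x ^ n)"
  by (cases "even n") (auto intro: convex_power_odd convex_on_subset[OF convex_power_even])

lemma sum_offdiag_products:
  fixes a :: "'i \<Rightarrow> real" assumes I: "finite I"
  shows "(\<Sum>k\<in>I. \<Sum>l\<in>I - {k}. a k * a l) = (\<Sum>k\<in>I. a k)\<^sup>2 - (\<Sum>k\<in>I. (a k)\<^sup>2)"
proof -
  have "(\<Sum>k\<in>I. \<Sum>l\<in>I - {k}. a k * a l) = (\<Sum>k\<in>I. a k * (\<Sum>l\<in>I. a l) - (a k)\<^sup>2)"
  proof (intro sum.cong refl)
    fix k assume k: "k \<in> I"
    have "(\<Sum>l\<in>I - {k}. a k * a l) = a k * ((\<Sum>l\<in>I. a l) - a k)"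
      using I k by (simp add: sum_distrib_left[symmetric] sum_diff1)
    then show "(\<Sum>l\<in>I - {k}. a k * a l) = a k * (\<Sum>l\<in>I. a l) - (a k)\<^sup>2"
      by (simp add: algebra_simps power2_eq_square)
  qed
  also have "\<dots> = (\<Sum>k\<in>I. a k)\<^sup>2 - (\<Sum>k\<in>I. (a k)\<^sup>2)"
    by (simp add: sum_subtractf sum_distrib_right[symmetric] power2_eq_square)
  finally show ?thesis .
qed

lemma normal_density_mgf:
  fixes s w :: real assumes s: "s > 0"
  shows "has_bochner_integral lborel (\<lambda>x. normal_density 0 s x * exp (x * w)) (exp (s\<^sup>2 * w\<^sup>2 / 2))"
proof -
  have eq: "normal_density 0 s x * exp (x * w) = exp (s\<^sup>2 * w\<^sup>2 / 2) * normal_density (s\<^sup>2 * w) s x" for x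
  proof -
    have "- (x - 0)\<^sup>2 / (2 * s\<^sup>2) + x * w = s\<^sup>2 * w\<^sup>2 / 2 + - (x - s\<^sup>2 * w)\<^sup>2 / (2 * s\<^sup>2)"
      using s by (simp add: field_simps power2_eq_square)
    then have "exp (- (x - 0)\<^sup>2 / (2 * s\<^sup>2)) * exp (x * w)
        = exp (s\<^sup>2 * w\<^sup>2 / 2) * exp (- (x - s\<^sup>2 * w)\<^sup>2 / (2 * s\<^sup>2))"
      by (simp add: exp_add[symmetric])
    then show ?thesis unfolding normal_density_def by (simp add: algebra_simps)
  qed
  have "has_bochner_integral lborel (\<lambda>x. exp (s\<^sup>2 * w\<^sup>2 / 2) * normal_density (s\<^sup>2 * w) s x)
      (exp (s\<^sup>2 * w\<^sup>2 / 2) * 1)"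
    by (intro has_bochner_integral_mult_right)
      (simp add: has_bochner_integral_iff integrable_normal_density[OF s] integral_normal_density[OF s])
  then show ?thesis by (simp add: eq)
qed

lemma normal_density_exp_sq:
  fixes s t :: real assumes s: "s > 0" and st: "s\<^sup>2 * t\<^sup>2 < 1"
  shows "has_bochner_integral lborel (\<lambda>x. normal_density 0 s x * exp (x\<^sup>2 * t\<^sup>2 / 2))
    (1 / sqrt (1 - s\<^sup>2 * t\<^sup>2))"
proof -
  define a where "a = 1 - s\<^sup>2 * t\<^sup>2"
  have a: "a > 0" using st by (simp add: a_def)
  define s' where "s' = s / sqrt a"
  have s': "s' > 0" using s a by (simp add: s'_def)
  have s'2: "s'\<^sup>2 = s\<^sup>2 / a" using a by (simp add: s'_def power_divide)
  have eq: "normal_density 0 s x * exp (x\<^sup>2 * t\<^sup>2 / 2) = (1 / sqrt a) * normal_density 0 s' x" for x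
  proof -
    have e1: "- (x - 0)\<^sup>2 / (2 * s\<^sup>2) + x\<^sup>2 * t\<^sup>2 / 2 = - (x - 0)\<^sup>2 / (2 * s'\<^sup>2)"
      using s a unfolding s'2 a_def by (simp add: field_simps)
    have e2: "1 / sqrt (2 * pi * s'\<^sup>2) = sqrt a / sqrt (2 * pi * s\<^sup>2)"
      using s a unfolding s'2 by (simp add: real_sqrt_divide real_sqrt_mult field_simps)
    have e3: "exp (- (x - 0)\<^sup>2 / (2 * s\<^sup>2)) * exp (x\<^sup>2 * t\<^sup>2 / 2) = exp (- (x - 0)\<^sup>2 / (2 * s'\<^sup>2))"
      by (subst mult_exp_exp) (rule arg_cong[where f=exp], rule e1)
    have "normal_density 0 s x * exp (x\<^sup>2 * t\<^sup>2 / 2)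
        = 1 / sqrt (2 * pi * s\<^sup>2) * exp (- (x - 0)\<^sup>2 / (2 * s'\<^sup>2))"
      unfolding normal_density_def e3[symmetric] by (simp only: mult.assoc)
    also have "\<dots> = (1 / sqrt a) * normal_density 0 s' x"
      unfolding normal_density_def e2 using a by simp
    finally show ?thesis .
  qed
  have "has_bochner_integral lborel (\<lambda>x. (1 / sqrt a) * normal_density 0 s' x) ((1 / sqrt a) * 1)"
    by (intro has_bochner_integral_mult_right)
      (simp add: has_bochner_integral_iff integrable_normal_density[OF s'] integral_normal_density[OF s'])
  then show ?thesis by (simp add: eq a_def)
qed

section \<open>Sub-gaussian moment generating function bounds\<close>

text \<open>The mgf condition behind the sub-gaussian norm, for a fixed parameter and without centering:
  a centred \<open>W\<close> satisfies it for every \<open>t > \<tau>(W)\<close>.\<close>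
definition subgauss_bound :: "'a measure \<Rightarrow> ('a \<Rightarrow> real) \<Rightarrow> real \<Rightarrow> bool" where
  "subgauss_bound Q W t \<longleftrightarrow> W \<in> borel_measurable Q \<and>
     (\<forall>l. integrable Q (\<lambda>x. exp (l * W x)) \<and> (\<integral>x. exp (l * W x) \<partial>Q) \<le> exp (l\<^sup>2 * t\<^sup>2 / 2))"

lemma subgauss_bound_measurable [measurable_dest]:
  "subgauss_bound Q W t \<Longrightarrow> W \<in> borel_measurable Q"
  by (simp add: subgauss_bound_def)

lemma subgauss_bound_mono:
  assumes W: "subgauss_bound Q W t" and t: "\<bar>t\<bar> \<le> t'"
  shows "subgauss_bound Q W t'"
proof -
  have "l\<^sup>2 * t\<^sup>2 / 2 \<le> l\<^sup>2 * t'\<^sup>2 / 2" for l :: real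
    using t by (intro divide_right_mono mult_left_mono) (auto simp: abs_le_iff intro: power2_le_iff_abs_le[THEN iffD2])
  then show ?thesis using W unfolding subgauss_bound_def by (blast intro: order_trans)
qed

lemma subgauss_bound_uminus:
  assumes "subgauss_bound Q W t" shows "subgauss_bound Q (\<lambda>x. - W x) t"
proof -
  have "integrable Q (\<lambda>x. exp (l * - W x)) \<and> (\<integral>x. exp (l * - W x) \<partial>Q) \<le> exp (l\<^sup>2 * t\<^sup>2 / 2)" for l
    using assms[unfolded subgauss_bound_def, THEN conjunct2, rule_format, of "- l"] by simp
  then show ?thesis using assms by (simp add: subgauss_bound_def)
qed

lemma subgaussian_imp_subgauss_bound:
  assumes sg: "subgaussian Q W" and mean: "integral\<^sup>L Q W = 0"
    and norm: "subgauss_norm Q W \<le> \<sigma>" and t: "\<sigma> < t"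
  shows "subgauss_bound Q W t"
proof -
  have ne: "subgauss_set Q W \<noteq> {}" using sg by (simp add: subgaussian_def)
  have "Inf (subgauss_set Q W) < t" using norm t by (simp add: subgauss_norm_def)
  then obtain s where s: "s \<in> subgauss_set Q W" "s < t" using cInf_lessD[OF ne] by blast
  then have "subgauss_bound Q W s"
    using sg mean by (simp add: subgauss_bound_def subgauss_set_def subgaussian_def)
  then show ?thesis using s by (auto simp: subgauss_set_def intro: subgauss_bound_mono)
qed

context prob_space
begin

lemma subgauss_bound_integrable_sq:
  assumes W: "subgauss_bound M W t"
  shows "integrable M (\<lambda>x. (W x)\<^sup>2)"
proof (rule Bochner_Integration.integrable_bound)
  have "integrable M (\<lambda>x. exp (l * W x))" for l using W by (simp add: subgauss_bound_def)
  from this[of 1] this[of "-1"] show "integrable M (\<lambda>x. exp (W x) + exp (- W x) - 2)" by simp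
  show "AE x in M. norm ((W x)\<^sup>2) \<le> norm (exp (W x) + exp (- W x) - 2)"
    using sq_le_exp_plus_exp_uminus by (auto intro!: AE_I2 order.trans[OF _ abs_ge_self])
qed (use W in measurable)

lemma subgauss_bound_integrable:
  assumes W: "subgauss_bound M W t"
  shows "integrable M W"
proof (rule square_integrable_imp_integrable)
  show "W \<in> borel_measurable M" using W by measurable
qed (rule subgauss_bound_integrable_sq[OF W])

lemma subgauss_bound_mean_zero:
  assumes W: "subgauss_bound M W t"
  shows "(\<integral>x. W x \<partial>M) = 0"
proof -
  have le0: "(\<integral>x. V x \<partial>M) \<le> 0" if V: "subgauss_bound M V t" for V
  proof (rule tendsto_lowerbound)
    show "((\<lambda>l. l * t\<^sup>2 / 2 * exp (l\<^sup>2 * t\<^sup>2 / 2)) \<longlongrightarrow> 0) (at_right 0)"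
      by (rule tendsto_eq_intros refl | simp)+
    have "(\<integral>x. V x \<partial>M) \<le> l * t\<^sup>2 / 2 * exp (l\<^sup>2 * t\<^sup>2 / 2)" if l: "l > 0" for l
    proof -
      have IE: "integrable M (\<lambda>x. exp (l * V x))" and BE: "(\<integral>x. exp (l * V x) \<partial>M) \<le> exp (l\<^sup>2 * t\<^sup>2 / 2)"
        using V by (auto simp: subgauss_bound_def)
      have "l * (\<integral>x. V x \<partial>M) = (\<integral>x. 1 + l * V x \<partial>M) - 1"
        using subgauss_bound_integrable[OF V] by (simp add: prob_space)
      also have "\<dots> \<le> (\<integral>x. exp (l * V x) \<partial>M) - 1"
        using subgauss_bound_integrable[OF V] IE by (intro diff_right_mono integral_mono) auto
      also have "\<dots> \<le> l\<^sup>2 * t\<^sup>2 / 2 * exp (l\<^sup>2 * t\<^sup>2 / 2)"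
        using BE expm1_le_mult_exp[of "l\<^sup>2 * t\<^sup>2 / 2"] by simp
      finally show ?thesis using l by (simp add: power2_eq_square field_simps)
    qed
    then show "\<forall>\<^sub>F l in at_right 0. (\<integral>x. V x \<partial>M) \<le> l * t\<^sup>2 / 2 * exp (l\<^sup>2 * t\<^sup>2 / 2)"
      by (auto intro: eventually_at_rightI[of 0 1])
  qed simp
  show ?thesis
    using le0[OF W] le0[OF subgauss_bound_uminus[OF W]] by simp
qed

lemma subgauss_bound_second_moment:
  assumes W: "subgauss_bound M W t"
  shows "(\<integral>x. (W x)\<^sup>2 \<partial>M) \<le> t\<^sup>2"
proof (rule tendsto_lowerbound)
  show "((\<lambda>l. t\<^sup>2 * exp (l\<^sup>2 * t\<^sup>2 / 2)) \<longlongrightarrow> t\<^sup>2) (at_right 0)"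
    by (rule tendsto_eq_intros refl | simp)+
  have "(\<integral>x. (W x)\<^sup>2 \<partial>M) \<le> t\<^sup>2 * exp (l\<^sup>2 * t\<^sup>2 / 2)" if l: "l > 0" for l
  proof -
    have IE: "integrable M (\<lambda>x. exp (l * W x))" "integrable M (\<lambda>x. exp (- l * W x))"
      and BE: "(\<integral>x. exp (l * W x) \<partial>M) \<le> exp (l\<^sup>2 * t\<^sup>2 / 2)" "(\<integral>x. exp (- l * W x) \<partial>M) \<le> exp (l\<^sup>2 * t\<^sup>2 / 2)"
      using W unfolding subgauss_bound_def by (metis power2_minus)+
    have "l\<^sup>2 * (\<integral>x. (W x)\<^sup>2 \<partial>M) = (\<integral>x. (l * W x)\<^sup>2 \<partial>M)"
      by (simp add: power_mult_distrib)
    also have "\<dots> \<le> (\<integral>x. exp (l * W x) + exp (- l * W x) - 2 \<partial>M)"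
      using subgauss_bound_integrable_sq[OF W] IE sq_le_exp_plus_exp_uminus[of "l * W x" for x]
      by (intro integral_mono) (auto simp: power_mult_distrib)
    also have "\<dots> \<le> 2 * (exp (l\<^sup>2 * t\<^sup>2 / 2) - 1)" using IE BE by (simp add: prob_space)
    also have "\<dots> \<le> l\<^sup>2 * (t\<^sup>2 * exp (l\<^sup>2 * t\<^sup>2 / 2))"
      using expm1_le_mult_exp[of "l\<^sup>2 * t\<^sup>2 / 2"] by simp
    finally show ?thesis using l by simp
  qed
  then show "\<forall>\<^sub>F l in at_right 0. (\<integral>x. (W x)\<^sup>2 \<partial>M) \<le> t\<^sup>2 * exp (l\<^sup>2 * t\<^sup>2 / 2)"
    by (auto intro: eventually_at_rightI[of 0 1])
qed simp

text \<open>The Gaussian trick: \<open>exp (\<theta> W\<^sup>2)\<close> is the average of \<open>exp (y W)\<close> over \<open>y \<sim> N(0, 2\<theta>)\<close>,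
  so Fubini and the mgf bound reduce its expectation to a Gaussian integral.\<close>
lemma subgauss_bound_exp_sq:
  assumes W: "subgauss_bound M W t" and \<theta>: "0 < \<theta>" and \<theta>t: "2 * \<theta> * t\<^sup>2 < 1"
  shows "integrable M (\<lambda>x. exp (\<theta> * (W x)\<^sup>2))"
    and "(\<integral>x. exp (\<theta> * (W x)\<^sup>2) \<partial>M) \<le> 1 / sqrt (1 - 2 * \<theta> * t\<^sup>2)"
proof -
  have [measurable]: "W \<in> borel_measurable M" using W by measurable
  define s where "s = sqrt (2 * \<theta>)"
  have s: "s > 0" using \<theta> by (simp add: s_def)
  have s2: "s\<^sup>2 = 2 * \<theta>" using \<theta> by (simp add: s_def)
  interpret pair_sigma_finite M lborel
    by (simp add: pair_sigma_finite_def prob_space_imp_sigma_finite prob_space_axioms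
        lborel.sigma_finite_measure_axioms)
  have inner_y: "(\<integral>\<^sup>+y. ennreal (normal_density 0 s y * exp (y * W x)) \<partial>lborel) = ennreal (exp (\<theta> * (W x)\<^sup>2))" for x
    using normal_density_mgf[OF s, of "W x"] s2
    by (subst nn_integral_eq_integral) (auto simp: has_bochner_integral_iff)
  have inner_x: "(\<integral>\<^sup>+x. ennreal (normal_density 0 s y * exp (y * W x)) \<partial>M)
      \<le> ennreal (normal_density 0 s y * exp (y\<^sup>2 * t\<^sup>2 / 2))" for y
  proof -
    have "(\<integral>\<^sup>+x. ennreal (normal_density 0 s y * exp (y * W x)) \<partial>M)
        = ennreal (normal_density 0 s y * (\<integral>x. exp (y * W x) \<partial>M))"
      using W by (subst nn_integral_eq_integral) (auto simp: subgauss_bound_def)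
    also have "\<dots> \<le> ennreal (normal_density 0 s y * exp (y\<^sup>2 * t\<^sup>2 / 2))"
      using W by (intro ennreal_leI mult_left_mono) (auto simp: subgauss_bound_def)
    finally show ?thesis .
  qed
  have "(\<integral>\<^sup>+x. ennreal (exp (\<theta> * (W x)\<^sup>2)) \<partial>M)
      = (\<integral>\<^sup>+x. (\<integral>\<^sup>+y. ennreal (normal_density 0 s y * exp (y * W x)) \<partial>lborel) \<partial>M)"
    by (simp add: inner_y)
  also have "\<dots> = (\<integral>\<^sup>+y. (\<integral>\<^sup>+x. ennreal (normal_density 0 s y * exp (y * W x)) \<partial>M) \<partial>lborel)"
    by (rule Fubini'[symmetric]) measurable
  also have "\<dots> \<le> (\<integral>\<^sup>+y. ennreal (normal_density 0 s y * exp (y\<^sup>2 * t\<^sup>2 / 2)) \<partial>lborel)"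
    by (intro nn_integral_mono inner_x)
  also have "\<dots> = ennreal (1 / sqrt (1 - 2 * \<theta> * t\<^sup>2))"
    using normal_density_exp_sq[OF s] \<theta>t s2
    by (subst nn_integral_eq_integral) (auto simp: has_bochner_integral_iff mult.assoc)
  finally have le: "(\<integral>\<^sup>+x. ennreal (exp (\<theta> * (W x)\<^sup>2)) \<partial>M) \<le> ennreal (1 / sqrt (1 - 2 * \<theta> * t\<^sup>2))" .
  show int: "integrable M (\<lambda>x. exp (\<theta> * (W x)\<^sup>2))"
    using le by (intro integrableI_nonneg) (auto simp: top_unique intro: le_less_trans)
  have "ennreal (\<integral>x. exp (\<theta> * (W x)\<^sup>2) \<partial>M) \<le> ennreal (1 / sqrt (1 - 2 * \<theta> * t\<^sup>2))"
    using le int by (subst nn_integral_eq_integral[symmetric]) auto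
  then show "(\<integral>x. exp (\<theta> * (W x)\<^sup>2) \<partial>M) \<le> 1 / sqrt (1 - 2 * \<theta> * t\<^sup>2)"
    using \<theta>t by (subst (asm) ennreal_le_iff) auto
qed

lemma subgauss_bound_even_moment_le:
  assumes W: "subgauss_bound M W t" and t: "t > 0" and q: "q \<ge> 1" and r: "0 < r" "r < 1"
  shows "integrable M (\<lambda>x. (W x) ^ (2 * q))"
    and "(r / (2 * t\<^sup>2)) ^ q * (\<integral>x. (W x) ^ (2 * q) \<partial>M) \<le> pow_expm1_const q * (1 / sqrt (1 - r) - 1)"
proof -
  have [measurable]: "W \<in> borel_measurable M" using W by measurable
  define \<theta> where "\<theta> = r / (2 * t\<^sup>2)"
  have \<theta>: "\<theta> > 0" "2 * \<theta> * t\<^sup>2 = r" using r t by (simp_all add: \<theta>_def)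
  note E = subgauss_bound_exp_sq[OF W \<theta>(1)]
  have I: "integrable M (\<lambda>x. pow_expm1_const q * (exp (\<theta> * (W x)\<^sup>2) - 1))"
    using E(1) \<theta> r by auto
  have pw: "(\<theta> * (W x)\<^sup>2) ^ q \<le> pow_expm1_const q * (exp (\<theta> * (W x)\<^sup>2) - 1)" for x
    using \<theta> q by (intro pow_le_pow_expm1_const) auto
  have int: "integrable M (\<lambda>x. (\<theta> * (W x)\<^sup>2) ^ q)"
  proof (rule Bochner_Integration.integrable_bound[OF I])
    show "AE x in M. norm ((\<theta> * (W x)\<^sup>2) ^ q) \<le> norm (pow_expm1_const q * (exp (\<theta> * (W x)\<^sup>2) - 1))"
      using pw \<theta> by (auto intro!: order.trans[OF _ abs_ge_self])
  qed measurable
  have eq: "(\<theta> * (W x)\<^sup>2) ^ q = \<theta> ^ q * (W x) ^ (2 * q)" for x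
    by (simp add: power_mult_distrib power_mult)
  show "integrable M (\<lambda>x. (W x) ^ (2 * q))"
    using int \<theta> unfolding eq by simp
  have "\<theta> ^ q * (\<integral>x. (W x) ^ (2 * q) \<partial>M) = (\<integral>x. (\<theta> * (W x)\<^sup>2) ^ q \<partial>M)"
    unfolding eq by simp
  also have "\<dots> \<le> (\<integral>x. pow_expm1_const q * (exp (\<theta> * (W x)\<^sup>2) - 1) \<partial>M)"
    by (intro integral_mono int I pw)
  also have "\<dots> = pow_expm1_const q * ((\<integral>x. exp (\<theta> * (W x)\<^sup>2) \<partial>M) - 1)"
    using E(1) \<theta> r by (simp add: prob_space)
  also have "\<dots> \<le> pow_expm1_const q * (1 / sqrt (1 - r) - 1)"
    using E(2) \<theta> r by (intro mult_left_mono) (auto simp: pow_expm1_const_def)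
  finally show "(r / (2 * t\<^sup>2)) ^ q * (\<integral>x. (W x) ^ (2 * q) \<partial>M) \<le> pow_expm1_const q * (1 / sqrt (1 - r) - 1)"
    by (simp add: \<theta>_def)
qed

lemma subgauss_bound_even_moment:
  assumes W: "subgauss_bound M W t" and t: "t > 0" and q: "q \<ge> 2"
  shows "integrable M (\<lambda>x. (W x) ^ (2 * q))"
    and "(\<integral>x. (W x) ^ (2 * q) \<partial>M) + t ^ (2 * q) \<le> fact q * (2 * t\<^sup>2) ^ q"
proof -
  obtain r where r: "0 < r" "r < 1"
    and num: "(1 / r) ^ q * pow_expm1_const q * (1 / sqrt (1 - r) - 1) + 1 / 2 ^ q \<le> fact q"
    using exists_gauss_moment_ratio[OF q] by blast
  note E = subgauss_bound_even_moment_le[OF W t _ r]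
  show "integrable M (\<lambda>x. (W x) ^ (2 * q))" using E(1) q by simp
  have "(\<integral>x. (W x) ^ (2 * q) \<partial>M)
      = ((2 * t\<^sup>2) ^ q * (1 / r) ^ q) * ((r / (2 * t\<^sup>2)) ^ q * (\<integral>x. (W x) ^ (2 * q) \<partial>M))"
    using t r by (simp add: power_divide field_simps)
  also have "\<dots> \<le> ((2 * t\<^sup>2) ^ q * (1 / r) ^ q) * (pow_expm1_const q * (1 / sqrt (1 - r) - 1))"
    using E(2) q t r by (intro mult_left_mono) auto
  finally have "(\<integral>x. (W x) ^ (2 * q) \<partial>M) \<le> (2 * t\<^sup>2) ^ q * ((1 / r) ^ q * pow_expm1_const q * (1 / sqrt (1 - r) - 1))"
    by (simp add: algebra_simps)
  moreover have "t ^ (2 * q) = (2 * t\<^sup>2) ^ q * (1 / 2 ^ q)"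
    by (simp add: power_mult power_mult_distrib)
  ultimately have "(\<integral>x. (W x) ^ (2 * q) \<partial>M) + t ^ (2 * q)
      \<le> (2 * t\<^sup>2) ^ q * ((1 / r) ^ q * pow_expm1_const q * (1 / sqrt (1 - r) - 1) + 1 / 2 ^ q)"
    by (simp add: algebra_simps)
  also have "\<dots> \<le> (2 * t\<^sup>2) ^ q * fact q" using num t by (intro mult_left_mono) auto
  finally show "(\<integral>x. (W x) ^ (2 * q) \<partial>M) + t ^ (2 * q) \<le> fact q * (2 * t\<^sup>2) ^ q"
    by (simp add: mult.commute)
qed

lemma subgauss_bound_lincomb:
  assumes I: "finite I" and ind: "indep_vars (\<lambda>_. borel) B I"
    and B: "\<And>i. i \<in> I \<Longrightarrow> subgauss_bound M (B i) t"
  shows "subgauss_bound M (\<lambda>x. \<Sum>i\<in>I. c i * B i x) (t * sqrt (\<Sum>i\<in>I. (c i)\<^sup>2))"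
  unfolding subgauss_bound_def
proof (intro conjI allI)
  have [measurable]: "i \<in> I \<Longrightarrow> B i \<in> borel_measurable M" for i using B by measurable
  show "(\<lambda>x. \<Sum>i\<in>I. c i * B i x) \<in> borel_measurable M" by measurable
  fix l :: real
  have eq: "exp (l * (\<Sum>i\<in>I. c i * B i x)) = (\<Prod>i\<in>I. exp ((l * c i) * B i x))" for x
    using I by (simp add: sum_distrib_left exp_sum mult.assoc)
  have ind': "indep_vars (\<lambda>_. borel) (\<lambda>i x. exp ((l * c i) * B i x)) I"
    by (rule indep_vars_compose2[OF ind]) auto
  have Ii: "i \<in> I \<Longrightarrow> integrable M (\<lambda>x. exp ((l * c i) * B i x))" for i
    using B by (simp add: subgauss_bound_def)
  show "integrable M (\<lambda>x. exp (l * (\<Sum>i\<in>I. c i * B i x)))"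
    unfolding eq by (rule indep_vars_integrable[OF I ind' Ii])
  have "(\<integral>x. exp (l * (\<Sum>i\<in>I. c i * B i x)) \<partial>M) = (\<Prod>i\<in>I. \<integral>x. exp ((l * c i) * B i x) \<partial>M)"
    unfolding eq by (rule indep_vars_lebesgue_integral[OF I ind' Ii])
  also have "\<dots> \<le> (\<Prod>i\<in>I. exp ((l * c i)\<^sup>2 * t\<^sup>2 / 2))"
    using B by (intro prod_mono) (auto simp: subgauss_bound_def intro: integral_nonneg_AE)
  also have "\<dots> = exp (\<Sum>i\<in>I. (l * c i)\<^sup>2 * t\<^sup>2 / 2)" using I by (simp add: exp_sum)
  also have "(\<Sum>i\<in>I. (l * c i)\<^sup>2 * t\<^sup>2 / 2) = l\<^sup>2 * (t * sqrt (\<Sum>i\<in>I. (c i)\<^sup>2))\<^sup>2 / 2"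
    by (simp add: power_mult_distrib sum_distrib_left sum_divide_distrib[symmetric]
        sum_distrib_right[symmetric] algebra_simps sum_nonneg)
  finally show "(\<integral>x. exp (l * (\<Sum>i\<in>I. c i * B i x)) \<partial>M) \<le> exp (l\<^sup>2 * (t * sqrt (\<Sum>i\<in>I. (c i)\<^sup>2))\<^sup>2 / 2)" .
qed

text \<open>Conditioning on the sign: the mgf of \<open>U H\<close> is a convex combination of those of \<open>H\<close> and \<open>-H\<close>.\<close>
lemma integral_exp_sign_mult:
  fixes U H :: "'a \<Rightarrow> real"
  assumes U: "U \<in> borel_measurable M" "AE x in M. U x = 1 \<or> U x = -1"
    and ind: "indep_var borel U borel H" and IH: "\<And>c. integrable M (\<lambda>x. exp (c * H x))"
  shows "integrable M (\<lambda>x. exp (l * (U x * H x)))"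
    and "(\<integral>x. exp (l * (U x * H x)) \<partial>M) = (\<integral>x. (1 + U x) / 2 \<partial>M) * (\<integral>x. exp (l * H x) \<partial>M)
      + (\<integral>x. (1 - U x) / 2 \<partial>M) * (\<integral>x. exp (- l * H x) \<partial>M)"
proof -
  have [measurable]: "U \<in> borel_measurable M" "H \<in> borel_measurable M"
    using U(1) ind by (auto simp: indep_var_def indep_vars_def dest!: spec[of _ False])
  define p where "p \<epsilon> x = (1 + \<epsilon> * U x) / 2" for \<epsilon> :: real and x
  have IU: "integrable M U"
  proof (rule Bochner_Integration.integrable_bound[of _ "\<lambda>x. 1::real"])
    show "AE x in M. norm (U x) \<le> norm (1::real)" using U(2) by eventually_elim auto
  qed auto
  have Ip: "integrable M (p \<epsilon>)" for \<epsilon> unfolding p_def using IU by simp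
  have iv: "indep_var borel (p \<epsilon>) borel (\<lambda>x. exp (\<epsilon> * l * H x))" for \<epsilon>
    using indep_var_compose[OF ind, of "\<lambda>u. (1 + \<epsilon> * u) / 2" borel "\<lambda>h. exp (\<epsilon> * l * h)" borel]
    by (simp add: comp_def p_def[abs_def])
  have Ipe: "integrable M (\<lambda>x. p \<epsilon> x * exp (\<epsilon> * l * H x))"
    and Epe: "(\<integral>x. p \<epsilon> x * exp (\<epsilon> * l * H x) \<partial>M) = (\<integral>x. p \<epsilon> x \<partial>M) * (\<integral>x. exp (\<epsilon> * l * H x) \<partial>M)" for \<epsilon>
    by (rule indep_var_integrable[OF iv Ip IH], rule indep_var_lebesgue_integral[OF iv Ip IH])
  have ae: "AE x in M. exp (l * (U x * H x)) = p 1 x * exp (l * H x) + p (-1) x * exp (- l * H x)"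
    using U(2) by eventually_elim (auto simp: p_def)
  have Isum: "integrable M (\<lambda>x. p 1 x * exp (l * H x) + p (-1) x * exp (- l * H x))"
    using Ipe[of 1] Ipe[of "-1"] by simp
  show "integrable M (\<lambda>x. exp (l * (U x * H x)))"
  proof (rule integrable_cong_AE_imp[OF Isum])
    show "AE x in M. p 1 x * exp (l * H x) + p (-1) x * exp (- l * H x) = exp (l * (U x * H x))"
      using ae by eventually_elim simp
  qed measurable
  have "(\<integral>x. exp (l * (U x * H x)) \<partial>M) = (\<integral>x. p 1 x * exp (l * H x) + p (-1) x * exp (- l * H x) \<partial>M)"
    using ae by (rule integral_cong_AE[rotated 2]) (simp_all add: p_def[abs_def])
  also have "\<dots> = (\<integral>x. p 1 x \<partial>M) * (\<integral>x. exp (l * H x) \<partial>M) + (\<integral>x. p (-1) x \<partial>M) * (\<integral>x. exp (- l * H x) \<partial>M)"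
    using Ipe[of 1] Ipe[of "-1"] Epe[of 1] Epe[of "-1"] by simp
  finally show "(\<integral>x. exp (l * (U x * H x)) \<partial>M) = (\<integral>x. (1 + U x) / 2 \<partial>M) * (\<integral>x. exp (l * H x) \<partial>M)
      + (\<integral>x. (1 - U x) / 2 \<partial>M) * (\<integral>x. exp (- l * H x) \<partial>M)"
    by (simp add: p_def)
qed

lemma subgauss_bound_sign_mult:
  assumes U: "U \<in> borel_measurable M" "AE x in M. U x = 1 \<or> U x = -1"
    and ind: "indep_var borel U borel H" and H: "subgauss_bound M H t"
  shows "subgauss_bound M (\<lambda>x. U x * H x) t"
  unfolding subgauss_bound_def
proof (intro conjI allI)
  have [measurable]: "H \<in> borel_measurable M" using H by measurable
  show "(\<lambda>x. U x * H x) \<in> borel_measurable M" using U(1) by measurable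
  fix l :: real
  have IH: "integrable M (\<lambda>x. exp (c * H x))" for c using H by (simp add: subgauss_bound_def)
  note E = integral_exp_sign_mult[OF U ind IH, of l]
  show "integrable M (\<lambda>x. exp (l * (U x * H x)))" by (rule E(1))
  have IU: "integrable M U"
  proof (rule Bochner_Integration.integrable_bound[of _ "\<lambda>x. 1::real"])
    show "AE x in M. norm (U x) \<le> norm (1::real)" using U(2) by eventually_elim auto
  qed (use U(1) in auto)
  have w: "0 \<le> (\<integral>x. (1 + \<epsilon> * U x) / 2 \<partial>M)" if "\<epsilon> = 1 \<or> \<epsilon> = -1" for \<epsilon>
  proof (rule integral_nonneg_AE)
    show "AE x in M. 0 \<le> (1 + \<epsilon> * U x) / 2" using U(2) by eventually_elim (use that in auto)
  qed
  have B: "(\<integral>x. exp (l * H x) \<partial>M) \<le> exp (l\<^sup>2 * t\<^sup>2 / 2)" "(\<integral>x. exp (- l * H x) \<partial>M) \<le> exp (l\<^sup>2 * t\<^sup>2 / 2)"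
    using H unfolding subgauss_bound_def by (metis power2_minus)+
  have "(\<integral>x. exp (l * (U x * H x)) \<partial>M)
      \<le> (\<integral>x. (1 + U x) / 2 \<partial>M) * exp (l\<^sup>2 * t\<^sup>2 / 2) + (\<integral>x. (1 - U x) / 2 \<partial>M) * exp (l\<^sup>2 * t\<^sup>2 / 2)"
    unfolding E(2) using B w[of 1] w[of "-1"] by (intro add_mono mult_left_mono) auto
  also have "\<dots> = (\<integral>x. (1 + U x) / 2 + (1 - U x) / 2 \<partial>M) * exp (l\<^sup>2 * t\<^sup>2 / 2)"
    using IU by (simp add: distrib_right)
  also have "\<dots> = exp (l\<^sup>2 * t\<^sup>2 / 2)" by (simp add: add_divide_distrib[symmetric] prob_space)
  finally show "(\<integral>x. exp (l * (U x * H x)) \<partial>M) \<le> exp (l\<^sup>2 * t\<^sup>2 / 2)" .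
qed

end

section \<open>Sub-exponential moment bounds\<close>

text \<open>The moment bounds behind \<open>\<parallel>X\<parallel>\<^sub>\<psi> \<le> c\<close>, for a fixed real \<open>c\<close>, so that sums,
  scalings and limits in \<open>c\<close> can be handled without extended reals.\<close>
definition subexp_bound :: "'a measure \<Rightarrow> ('a \<Rightarrow> real) \<Rightarrow> real \<Rightarrow> bool" where
  "subexp_bound Q X c \<longleftrightarrow> X \<in> borel_measurable Q \<and>
     (\<forall>q\<ge>1. integrable Q (\<lambda>x. \<bar>X x\<bar> ^ q) \<and> (\<integral>x. \<bar>X x\<bar> ^ q \<partial>Q) \<le> fact q * c ^ q)"

lemma subexp_bound_measurable [measurable_dest]:
  "subexp_bound Q X c \<Longrightarrow> X \<in> borel_measurable Q"
  by (simp add: subexp_bound_def)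

lemma subexp_bound_integrable:
  assumes "subexp_bound Q X c" shows "integrable Q X"
proof -
  have "integrable Q (\<lambda>x. \<bar>X x\<bar> ^ 1)" using assms unfolding subexp_bound_def by blast
  then show ?thesis using assms by (simp add: integrable_abs_iff)
qed

lemma subexp_bound_nonneg:
  assumes "subexp_bound Q X c" shows "c \<ge> 0"
proof -
  have "0 \<le> (\<integral>x. \<bar>X x\<bar> ^ 1 \<partial>Q)" by (intro integral_nonneg_AE) auto
  also have "\<dots> \<le> fact 1 * c ^ 1" using assms unfolding subexp_bound_def by blast
  finally show ?thesis by simp
qed

lemma subexp_bound_imp_subexp_norm_le:
  assumes X: "subexp_bound Q X c"
  shows "subexp_norm Q X \<le> ereal c"
  unfolding subexp_norm_def
proof (rule SUP_least)
  fix k :: nat assume "k \<in> {1..}"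
  then have k: "k \<ge> 1" by simp
  have I: "integrable Q (\<lambda>x. \<bar>X x\<bar> ^ k)" and B: "(\<integral>x. \<bar>X x\<bar> ^ k \<partial>Q) / fact k \<le> c ^ k"
    using X k by (auto simp: subexp_bound_def field_simps)
  have "((\<integral>x. \<bar>X x\<bar> ^ k \<partial>Q) / fact k) powr (1 / real k) \<le> (c ^ k) powr (1 / real k)"
    using B by (intro powr_mono2) (auto intro: divide_nonneg_pos integral_nonneg_AE)
  also have "(c ^ k) powr (1 / real k) = c"
    using subexp_bound_nonneg[OF X] k
    by (cases "c = 0") (auto simp: power_0_left powr_realpow[symmetric] powr_powr)
  finally show "(if integrable Q (\<lambda>x. \<bar>X x\<bar> ^ k)
      then ereal (((\<integral>x. \<bar>X x\<bar> ^ k \<partial>Q) / fact k) powr (1 / real k)) else \<infinity>) \<le> ereal c"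
    using I by simp
qed

lemma subexp_bound_imp_subexponential:
  assumes "subexp_bound Q X c" shows "subexponential Q X"
  using assms subexp_bound_imp_subexp_norm_le[OF assms]
  by (auto simp: subexponential_def intro: le_less_trans)

lemma subexp_bound_mono:
  assumes X: "subexp_bound Q X c" and c: "c \<le> c'"
  shows "subexp_bound Q X c'"
  unfolding subexp_bound_def
proof (intro conjI allI impI)
  show "X \<in> borel_measurable Q" using X by measurable
  fix q :: nat assume q: "q \<ge> 1"
  show "integrable Q (\<lambda>x. \<bar>X x\<bar> ^ q)" using X q by (simp add: subexp_bound_def)
  have "(\<integral>x. \<bar>X x\<bar> ^ q \<partial>Q) \<le> fact q * c ^ q" using X q by (simp add: subexp_bound_def)
  also have "\<dots> \<le> fact q * c' ^ q"
    using subexp_bound_nonneg[OF X] c by (intro mult_left_mono power_mono) auto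
  finally show "(\<integral>x. \<bar>X x\<bar> ^ q \<partial>Q) \<le> fact q * c' ^ q" .
qed

lemma subexp_bound_tendsto:
  assumes c: "(c \<longlongrightarrow> c0) F" and F: "F \<noteq> bot"
    and ev: "eventually (\<lambda>i. subexp_bound Q X (c i)) F"
  shows "subexp_bound Q X c0"
proof -
  obtain i where X: "subexp_bound Q X (c i)" using eventually_happens'[OF F ev] by blast
  show ?thesis unfolding subexp_bound_def
  proof (intro conjI allI impI)
    show "X \<in> borel_measurable Q" using X by measurable
    fix q :: nat assume q: "q \<ge> 1"
    show "integrable Q (\<lambda>x. \<bar>X x\<bar> ^ q)" using X q by (simp add: subexp_bound_def)
    show "(\<integral>x. \<bar>X x\<bar> ^ q \<partial>Q) \<le> fact q * c0 ^ q"
    proof (rule tendsto_lowerbound)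
      show "((\<lambda>i. fact q * c i ^ q) \<longlongrightarrow> fact q * c0 ^ q) F" by (intro tendsto_intros c)
      show "\<forall>\<^sub>F i in F. (\<integral>x. \<bar>X x\<bar> ^ q \<partial>Q) \<le> fact q * c i ^ q"
        using ev by eventually_elim (use q in \<open>simp add: subexp_bound_def\<close>)
    qed (use F in simp)
  qed
qed

lemma subexp_bound_dominated:
  assumes X: "subexp_bound Q X c" and Y: "Y \<in> borel_measurable Q"
    and le: "\<And>x. x \<in> space Q \<Longrightarrow> \<bar>Y x\<bar> \<le> \<bar>X x\<bar>"
  shows "subexp_bound Q Y c"
  unfolding subexp_bound_def
proof (intro conjI allI impI Y)
  fix q :: nat assume q: "q \<ge> 1"
  have IX: "integrable Q (\<lambda>x. \<bar>X x\<bar> ^ q)" using X q by (simp add: subexp_bound_def)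
  have pw: "x \<in> space Q \<Longrightarrow> \<bar>Y x\<bar> ^ q \<le> \<bar>X x\<bar> ^ q" for x using le by (intro power_mono) auto
  show "integrable Q (\<lambda>x. \<bar>Y x\<bar> ^ q)"
    by (rule Bochner_Integration.integrable_bound[OF IX]) (use Y pw in \<open>auto intro!: AE_I2\<close>)
  have "(\<integral>x. \<bar>Y x\<bar> ^ q \<partial>Q) \<le> (\<integral>x. \<bar>X x\<bar> ^ q \<partial>Q)"
    by (intro integral_mono' IX) (use pw in \<open>auto intro!: AE_I2\<close>)
  also have "\<dots> \<le> fact q * c ^ q" using X q by (simp add: subexp_bound_def)
  finally show "(\<integral>x. \<bar>Y x\<bar> ^ q \<partial>Q) \<le> fact q * c ^ q" .
qed

lemma subexp_bound_cong:
  assumes "subexp_bound Q X c" "Y \<in> borel_measurable Q" "\<And>x. x \<in> space Q \<Longrightarrow> Y x = X x"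
  shows "subexp_bound Q Y c"
  using assms(1,2) by (rule subexp_bound_dominated) (simp add: assms(3))

lemma subexp_bound_zero: "subexp_bound Q (\<lambda>x. 0) 0"
  by (auto simp: subexp_bound_def power_0_left)

lemma subexp_bound_scale:
  assumes X: "subexp_bound Q X c"
  shows "subexp_bound Q (\<lambda>x. a * X x) (\<bar>a\<bar> * c)"
  unfolding subexp_bound_def
proof (intro conjI allI impI)
  show "(\<lambda>x. a * X x) \<in> borel_measurable Q" using X by measurable
  fix q :: nat assume q: "q \<ge> 1"
  have eq: "(\<lambda>x. \<bar>a * X x\<bar> ^ q) = (\<lambda>x. \<bar>a\<bar> ^ q * \<bar>X x\<bar> ^ q)" by (simp add: abs_mult power_mult_distrib)
  show "integrable Q (\<lambda>x. \<bar>a * X x\<bar> ^ q)" unfolding eq using X q by (simp add: subexp_bound_def)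
  have "(\<integral>x. \<bar>a * X x\<bar> ^ q \<partial>Q) = \<bar>a\<bar> ^ q * (\<integral>x. \<bar>X x\<bar> ^ q \<partial>Q)" unfolding eq by simp
  also have "\<dots> \<le> \<bar>a\<bar> ^ q * (fact q * c ^ q)" using X q by (intro mult_left_mono) (auto simp: subexp_bound_def)
  finally show "(\<integral>x. \<bar>a * X x\<bar> ^ q \<partial>Q) \<le> fact q * (\<bar>a\<bar> * c) ^ q"
    by (simp add: power_mult_distrib algebra_simps)
qed

text \<open>Convexity of \<open>x\<^sup>q\<close> applied with the weights \<open>w i = c i / (\<Sum>j. c j)\<close>.\<close>
lemma abs_sum_pow_le_weighted:
  fixes x c :: "'i \<Rightarrow> real"
  assumes I: "finite I" and c: "\<And>i. i \<in> I \<Longrightarrow> c i > 0" and q: "q \<ge> 1"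
  defines "C \<equiv> \<Sum>i\<in>I. c i"
  shows "\<bar>\<Sum>i\<in>I. x i\<bar> ^ q \<le> (\<Sum>i\<in>I. (C / c i) ^ (q - 1) * \<bar>x i\<bar> ^ q)"
proof (cases "I = {}")
  case False
  have C: "C > 0" unfolding C_def using I c False by (intro sum_pos) auto
  define w where "w i = c i / C" for i
  have w: "i \<in> I \<Longrightarrow> w i > 0" for i using c C by (simp add: w_def)
  have ws: "(\<Sum>i\<in>I. w i) = 1" using C by (simp add: w_def C_def sum_divide_distrib[symmetric])
  have "\<bar>\<Sum>i\<in>I. x i\<bar> ^ q \<le> (\<Sum>i\<in>I. \<bar>x i\<bar>) ^ q"
    by (intro power_mono sum_abs) auto
  also have "(\<Sum>i\<in>I. \<bar>x i\<bar>) = (\<Sum>i\<in>I. w i *\<^sub>R (\<bar>x i\<bar> / w i))"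
    using w by (intro sum.cong) (auto dest!: w simp: less_imp_neq[symmetric])
  also have "(\<Sum>i\<in>I. w i *\<^sub>R (\<bar>x i\<bar> / w i)) ^ q \<le> (\<Sum>i\<in>I. w i * (\<bar>x i\<bar> / w i) ^ q)"
    using I ws w by (intro convex_on_sum[OF _ _ convex_on_power_nonneg, where S=I]) (auto simp: less_imp_le)
  also have "\<dots> = (\<Sum>i\<in>I. (C / c i) ^ (q - 1) * \<bar>x i\<bar> ^ q)"
  proof (intro sum.cong refl)
    fix i assume i: "i \<in> I"
    have "w i * (\<bar>x i\<bar> / w i) ^ q = \<bar>x i\<bar> ^ q / w i ^ (q - 1)"
      using w[OF i] q by (simp add: power_divide power_eq_if[of "w i" q] field_simps)
    then show "w i * (\<bar>x i\<bar> / w i) ^ q = (C / c i) ^ (q - 1) * \<bar>x i\<bar> ^ q"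
      using c[OF i] C by (simp add: w_def power_divide field_simps)
  qed
  finally show ?thesis .
qed (use q in \<open>simp add: power_0_left\<close>)

lemma subexp_bound_sum_pos:
  assumes I: "finite I" "I \<noteq> {}" and X: "\<And>i. i \<in> I \<Longrightarrow> subexp_bound Q (X i) (c i)"
    and c: "\<And>i. i \<in> I \<Longrightarrow> c i > 0"
  shows "subexp_bound Q (\<lambda>x. \<Sum>i\<in>I. X i x) (\<Sum>i\<in>I. c i)"
  unfolding subexp_bound_def
proof (intro conjI allI impI)
  have [measurable]: "X i \<in> borel_measurable Q" if "i \<in> I" for i using X[OF that] by measurable
  show "(\<lambda>x. \<Sum>i\<in>I. X i x) \<in> borel_measurable Q" by measurable
  define C where "C = (\<Sum>i\<in>I. c i)"
  have C: "C > 0" unfolding C_def using I c by (intro sum_pos) auto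
  fix q :: nat assume q: "q \<ge> 1"
  have IX: "i \<in> I \<Longrightarrow> integrable Q (\<lambda>x. \<bar>X i x\<bar> ^ q)" for i using X q by (simp add: subexp_bound_def)
  have pw: "\<bar>\<Sum>i\<in>I. X i x\<bar> ^ q \<le> (\<Sum>i\<in>I. (C / c i) ^ (q - 1) * \<bar>X i x\<bar> ^ q)" for x
    unfolding C_def using I(1) c q by (rule abs_sum_pow_le_weighted)
  have IS: "integrable Q (\<lambda>x. \<Sum>i\<in>I. (C / c i) ^ (q - 1) * \<bar>X i x\<bar> ^ q)"
    by (auto intro!: Bochner_Integration.integrable_sum integrable_mult_right IX)
  show "integrable Q (\<lambda>x. \<bar>\<Sum>i\<in>I. X i x\<bar> ^ q)"
    by (rule Bochner_Integration.integrable_bound[OF IS]) (auto intro!: AE_I2 order.trans[OF pw] abs_ge_self)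
  then have "(\<integral>x. \<bar>\<Sum>i\<in>I. X i x\<bar> ^ q \<partial>Q) \<le> (\<integral>x. (\<Sum>i\<in>I. (C / c i) ^ (q - 1) * \<bar>X i x\<bar> ^ q) \<partial>Q)"
    by (rule integral_mono[OF _ IS pw])
  also have "\<dots> = (\<Sum>i\<in>I. (C / c i) ^ (q - 1) * (\<integral>x. \<bar>X i x\<bar> ^ q \<partial>Q))"
    by (subst Bochner_Integration.integral_sum) (auto intro!: integrable_mult_right IX)
  also have "\<dots> \<le> (\<Sum>i\<in>I. (C / c i) ^ (q - 1) * (fact q * c i ^ q))"
    using X q by (intro sum_mono mult_left_mono) (auto simp: subexp_bound_def less_imp_le C c)
  also have "\<dots> = (\<Sum>i\<in>I. fact q * C ^ (q - 1) * c i)"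
  proof (intro sum.cong refl)
    fix i assume i: "i \<in> I"
    have "c i ^ q = c i ^ (q - 1) * c i" using q by (simp add: power_eq_if[of "c i" q])
    then show "(C / c i) ^ (q - 1) * (fact q * c i ^ q) = fact q * C ^ (q - 1) * c i"
      using c[OF i] by (simp add: power_divide field_simps)
  qed
  also have "\<dots> = fact q * C ^ (q - 1) * C" by (simp add: C_def sum_distrib_left)
  also have "\<dots> = fact q * C ^ q" using q by (simp add: power_eq_if[of C q])
  finally show "(\<integral>x. \<bar>\<Sum>i\<in>I. X i x\<bar> ^ q \<partial>Q) \<le> fact q * (\<Sum>i\<in>I. c i) ^ q" by (simp add: C_def)
qed

lemma subexp_bound_sum:
  assumes I: "finite I" and X: "\<And>i. i \<in> I \<Longrightarrow> subexp_bound Q (X i) (c i)"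
  shows "subexp_bound Q (\<lambda>x. \<Sum>i\<in>I. X i x) (\<Sum>i\<in>I. c i)"
proof (cases "I = {}")
  case True then show ?thesis by (simp add: subexp_bound_zero)
next
  case False
  show ?thesis
  proof (rule subexp_bound_tendsto)
    show "((\<lambda>\<delta>. \<Sum>i\<in>I. c i + \<delta>) \<longlongrightarrow> (\<Sum>i\<in>I. c i)) (at_right 0)"
      by (rule tendsto_eq_intros refl | simp)+
    have "subexp_bound Q (\<lambda>x. \<Sum>i\<in>I. X i x) (\<Sum>i\<in>I. c i + \<delta>)" if "\<delta> > 0" for \<delta>
      using I False X that subexp_bound_nonneg[OF X]
      by (intro subexp_bound_sum_pos subexp_bound_mono[OF X]) (auto simp: add_nonneg_pos)
    then show "\<forall>\<^sub>F \<delta> in at_right 0. subexp_bound Q (\<lambda>x. \<Sum>i\<in>I. X i x) (\<Sum>i\<in>I. c i + \<delta>)"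
      by (auto intro: eventually_at_rightI[of 0 1])
  qed simp
qed

lemma subexp_bound_add:
  assumes "subexp_bound Q X a" "subexp_bound Q Y b"
  shows "subexp_bound Q (\<lambda>x. X x + Y x) (a + b)"
  using subexp_bound_sum[of "{True, False}" Q "\<lambda>i. if i then X else Y" "\<lambda>i. if i then a else b"] assms
  by simp

lemma subexp_bound_diff_nonneg:
  assumes X: "subexp_bound Q X a" and Y: "subexp_bound Q Y a"
    and nonneg: "\<And>x. x \<in> space Q \<Longrightarrow> 0 \<le> X x" "\<And>x. x \<in> space Q \<Longrightarrow> 0 \<le> Y x"
    and ab: "3 * a \<le> 2 * b" and mean: "(\<integral>x. X x \<partial>Q) + (\<integral>x. Y x \<partial>Q) \<le> b"
  shows "subexp_bound Q (\<lambda>x. X x - Y x) b"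
proof -
  have [measurable]: "X \<in> borel_measurable Q" "Y \<in> borel_measurable Q" using X Y by measurable
  show ?thesis unfolding subexp_bound_def
  proof (rule conjI, measurable, intro allI impI)
    fix q :: nat assume q: "q \<ge> 1"
    have IX: "integrable Q (\<lambda>x. \<bar>X x\<bar> ^ q)" and EX: "(\<integral>x. \<bar>X x\<bar> ^ q \<partial>Q) \<le> fact q * a ^ q"
      and IY: "integrable Q (\<lambda>x. \<bar>Y x\<bar> ^ q)" and EY: "(\<integral>x. \<bar>Y x\<bar> ^ q \<partial>Q) \<le> fact q * a ^ q"
      using X Y q by (auto simp: subexp_bound_def)
    have pw: "\<bar>X x - Y x\<bar> ^ q \<le> \<bar>X x\<bar> ^ q + \<bar>Y x\<bar> ^ q" if "x \<in> space Q" for x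
      using abs_diff_pow_le_add_pow[of "X x" "Y x" q] nonneg that by simp
    have IB: "integrable Q (\<lambda>x. \<bar>X x\<bar> ^ q + \<bar>Y x\<bar> ^ q)" using IX IY by simp
    have I: "integrable Q (\<lambda>x. \<bar>X x - Y x\<bar> ^ q)"
    proof (rule Bochner_Integration.integrable_bound[OF IB])
      show "AE x in Q. norm (\<bar>X x - Y x\<bar> ^ q) \<le> norm (\<bar>X x\<bar> ^ q + \<bar>Y x\<bar> ^ q)"
        using pw by (auto intro!: AE_I2 order.trans[OF _ abs_ge_self])
    qed measurable
    show "integrable Q (\<lambda>x. \<bar>X x - Y x\<bar> ^ q) \<and> (\<integral>x. \<bar>X x - Y x\<bar> ^ q \<partial>Q) \<le> fact q * b ^ q"
    proof (cases "q = 1")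
      case True
      have "\<bar>X x - Y x\<bar> \<le> X x + Y x" if "x \<in> space Q" for x
        using nonneg[OF that] by (simp add: abs_le_iff)
      then have "(\<integral>x. \<bar>X x - Y x\<bar> ^ q \<partial>Q) \<le> (\<integral>x. X x + Y x \<partial>Q)"
        using I subexp_bound_integrable[OF X] subexp_bound_integrable[OF Y] True
        by (intro integral_mono) auto
      also have "\<dots> \<le> b"
        using subexp_bound_integrable[OF X] subexp_bound_integrable[OF Y] mean by simp
      finally show ?thesis using I True by simp
    next
      case False
      then have q2: "q \<ge> 2" using q by simp
      have ab': "2 * a ^ q \<le> b ^ q" using subexp_bound_nonneg[OF X] ab q2 by (rule two_mult_pow_le_pow)
      have "(\<integral>x. \<bar>X x - Y x\<bar> ^ q \<partial>Q) \<le> (\<integral>x. \<bar>X x\<bar> ^ q + \<bar>Y x\<bar> ^ q \<partial>Q)"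
        by (rule integral_mono[OF I IB pw])
      also have "\<dots> \<le> fact q * (2 * a ^ q)" using EX EY IX IY by simp
      also have "\<dots> \<le> fact q * b ^ q" using ab' by simp
      finally show ?thesis using I by simp
    qed
  qed
qed

lemma subexp_bound_mult:
  assumes X: "subexp_bound Q (\<lambda>x. (X x)\<^sup>2) a" and Y: "subexp_bound Q (\<lambda>x. (Y x)\<^sup>2) b"
    and [measurable]: "X \<in> borel_measurable Q" "Y \<in> borel_measurable Q"
  shows "subexp_bound Q (\<lambda>x. X x * Y x) (sqrt (a * b))"
proof (rule subexp_bound_tendsto)
  have a: "a \<ge> 0" and b: "b \<ge> 0" using X Y by (blast intro: subexp_bound_nonneg)+
  show "((\<lambda>\<delta>. sqrt (a + \<delta>) * sqrt (b + \<delta>)) \<longlongrightarrow> sqrt (a * b)) (at_right 0)"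
    by (rule tendsto_eq_intros refl | simp add: real_sqrt_mult)+
  have "subexp_bound Q (\<lambda>x. X x * Y x) (sqrt (a + \<delta>) * sqrt (b + \<delta>))" if \<delta>: "\<delta> > 0" for \<delta>
  proof -
    define p r where "p = sqrt (a + \<delta>)" and "r = sqrt (b + \<delta>)"
    have p: "p > 0" "p\<^sup>2 = a + \<delta>" and r: "r > 0" "r\<^sup>2 = b + \<delta>" using a b \<delta> by (auto simp: p_def r_def)
    have "subexp_bound Q (\<lambda>x. r / (2 * p) * (X x)\<^sup>2 + p / (2 * r) * (Y x)\<^sup>2)
        (\<bar>r / (2 * p)\<bar> * a + \<bar>p / (2 * r)\<bar> * b)"
      by (intro subexp_bound_add subexp_bound_scale X Y)
    then have S: "subexp_bound Q (\<lambda>x. r / (2 * p) * (X x)\<^sup>2 + p / (2 * r) * (Y x)\<^sup>2) (p * r)"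
    proof (rule subexp_bound_mono)
      have "r / (2 * p) * a \<le> r / (2 * p) * p\<^sup>2" using p r \<delta> by (intro mult_left_mono) auto
      moreover have "p / (2 * r) * b \<le> p / (2 * r) * r\<^sup>2" using p r \<delta> by (intro mult_left_mono) auto
      moreover have "r / (2 * p) * p\<^sup>2 + p / (2 * r) * r\<^sup>2 = p * r"
        using p(1) r(1) by (simp add: power2_eq_square field_simps)
      ultimately show "\<bar>r / (2 * p)\<bar> * a + \<bar>p / (2 * r)\<bar> * b \<le> p * r" using p r by simp
    qed
    show ?thesis unfolding p_def[symmetric] r_def[symmetric]
    proof (rule subexp_bound_dominated[OF S])
      fix x
      have "0 \<le> (r * \<bar>X x\<bar> - p * \<bar>Y x\<bar>)\<^sup>2 / (2 * p * r)" using p r by simp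
      also have "\<dots> = r / (2 * p) * (X x)\<^sup>2 + p / (2 * r) * (Y x)\<^sup>2 - \<bar>X x * Y x\<bar>"
        using p r by (simp add: power2_eq_square field_simps abs_mult)
      finally show "\<bar>X x * Y x\<bar> \<le> \<bar>r / (2 * p) * (X x)\<^sup>2 + p / (2 * r) * (Y x)\<^sup>2\<bar>" by simp
    qed measurable
  qed
  then show "\<forall>\<^sub>F \<delta> in at_right 0. subexp_bound Q (\<lambda>x. X x * Y x) (sqrt (a + \<delta>) * sqrt (b + \<delta>))"
    by (auto intro: eventually_at_rightI[of 0 1])
qed simp

context prob_space
begin

lemma subexp_bound_const: "subexp_bound M (\<lambda>x. a) \<bar>a\<bar>"
  unfolding subexp_bound_def
proof (intro conjI allI impI)
  fix q :: nat assume q: "q \<ge> 1"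
  have "1 * \<bar>a\<bar> ^ q \<le> fact q * \<bar>a\<bar> ^ q" by (intro mult_right_mono) auto
  then show "(\<integral>x. \<bar>a\<bar> ^ q \<partial>M) \<le> fact q * \<bar>a\<bar> ^ q" by (simp add: prob_space)
qed auto

lemma subexp_bound_centered_imp_subexponential:
  assumes X: "integrable M X" and c: "subexp_bound M (\<lambda>x. X x - (\<integral>x. X x \<partial>M)) c"
  shows "subexponential M X"
proof -
  have "subexp_bound M (\<lambda>x. (X x - (\<integral>x. X x \<partial>M)) + (\<integral>x. X x \<partial>M)) (c + \<bar>\<integral>x. X x \<partial>M\<bar>)"
    by (intro subexp_bound_add c subexp_bound_const)
  then show ?thesis by (auto dest: subexp_bound_imp_subexponential)
qed

lemma subexp_bound_centered_add:
  assumes X: "integrable M X" "subexp_bound M (\<lambda>x. X x - (\<integral>x. X x \<partial>M)) a"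
    and Y: "integrable M Y" "subexp_bound M (\<lambda>x. Y x - (\<integral>x. Y x \<partial>M)) b"
  shows "subexp_bound M (\<lambda>x. X x + Y x - (\<integral>x. X x + Y x \<partial>M)) (a + b)"
proof -
  have "subexp_bound M (\<lambda>x. (X x - (\<integral>x. X x \<partial>M)) + (Y x - (\<integral>x. Y x \<partial>M))) (a + b)"
    by (intro subexp_bound_add X Y)
  then show ?thesis
    by (rule subexp_bound_cong) (use X Y in \<open>auto simp: Bochner_Integration.integral_add\<close>)
qed

lemma subexp_bound_sq_shift_pos:
  assumes W: "subgauss_bound M W s" and s: "s > 0" and v: "0 \<le> v" "v \<le> s\<^sup>2"
  shows "subexp_bound M (\<lambda>x. (W x)\<^sup>2 - v) (2 * s\<^sup>2)"
proof -
  have [measurable]: "W \<in> borel_measurable M" using W by measurable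
  have I2: "integrable M (\<lambda>x. (W x)\<^sup>2)" by (rule subgauss_bound_integrable_sq[OF W])
  show ?thesis unfolding subexp_bound_def
  proof (rule conjI, measurable, intro allI impI)
    fix q :: nat assume q: "q \<ge> 1"
    show "integrable M (\<lambda>x. \<bar>(W x)\<^sup>2 - v\<bar> ^ q) \<and> (\<integral>x. \<bar>(W x)\<^sup>2 - v\<bar> ^ q \<partial>M) \<le> fact q * (2 * s\<^sup>2) ^ q"
    proof (cases "q = 1")
      case True
      have I1: "integrable M (\<lambda>x. \<bar>(W x)\<^sup>2 - v\<bar>)" using I2 by auto
      have "(\<integral>x. \<bar>(W x)\<^sup>2 - v\<bar> \<partial>M) \<le> (\<integral>x. (W x)\<^sup>2 + v \<partial>M)"
        using I1 I2 v by (intro integral_mono) (auto simp: abs_le_iff)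
      also have "\<dots> = (\<integral>x. (W x)\<^sup>2 \<partial>M) + v" using I2 by (simp add: prob_space)
      also have "\<dots> \<le> 2 * s\<^sup>2" using subgauss_bound_second_moment[OF W] v(2) by simp
      finally show ?thesis using True I1 by simp
    next
      case False
      then have q2: "q \<ge> 2" using q by simp
      note E = subgauss_bound_even_moment[OF W s q2]
      have pw: "\<bar>(W x)\<^sup>2 - v\<bar> ^ q \<le> (W x) ^ (2 * q) + s ^ (2 * q)" for x
      proof -
        have "\<bar>(W x)\<^sup>2 - v\<bar> ^ q \<le> ((W x)\<^sup>2) ^ q + v ^ q" using v by (intro abs_diff_pow_le_add_pow) auto
        moreover have "v ^ q \<le> (s\<^sup>2) ^ q" using v by (intro power_mono) auto
        ultimately show ?thesis unfolding power_mult by linarith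
      qed
      have IB: "integrable M (\<lambda>x. (W x) ^ (2 * q) + s ^ (2 * q))" using E(1) by simp
      have I: "integrable M (\<lambda>x. \<bar>(W x)\<^sup>2 - v\<bar> ^ q)"
      proof (rule Bochner_Integration.integrable_bound[OF IB])
        show "AE x in M. norm (\<bar>(W x)\<^sup>2 - v\<bar> ^ q) \<le> norm ((W x) ^ (2 * q) + s ^ (2 * q))"
          using pw by (auto intro!: AE_I2 order.trans[OF _ abs_ge_self])
      qed measurable
      have "(\<integral>x. \<bar>(W x)\<^sup>2 - v\<bar> ^ q \<partial>M) \<le> (\<integral>x. (W x) ^ (2 * q) + s ^ (2 * q) \<partial>M)"
        by (rule integral_mono[OF I IB pw])
      also have "\<dots> = (\<integral>x. (W x) ^ (2 * q) \<partial>M) + s ^ (2 * q)" using E(1) by (simp add: prob_space)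
      also have "\<dots> \<le> fact q * (2 * s\<^sup>2) ^ q" by (rule E(2))
      finally show ?thesis using I by simp
    qed
  qed
qed

lemma subexp_bound_sq_shift:
  assumes W: "subgauss_bound M W t" and v: "0 \<le> v" "v \<le> t\<^sup>2"
  shows "subexp_bound M (\<lambda>x. (W x)\<^sup>2 - v) (2 * t\<^sup>2)"
proof (rule subexp_bound_tendsto)
  show "((\<lambda>\<delta>. 2 * (\<bar>t\<bar> + \<delta>)\<^sup>2) \<longlongrightarrow> 2 * t\<^sup>2) (at_right 0)"
    by (rule tendsto_eq_intros refl | simp)+
  have "subexp_bound M (\<lambda>x. (W x)\<^sup>2 - v) (2 * (\<bar>t\<bar> + \<delta>)\<^sup>2)" if \<delta>: "\<delta> > 0" for \<delta>
  proof (rule subexp_bound_sq_shift_pos)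
    have "t\<^sup>2 \<le> (\<bar>t\<bar> + \<delta>)\<^sup>2" using \<delta> by (simp add: power2_le_iff_abs_le)
    then show "v \<le> (\<bar>t\<bar> + \<delta>)\<^sup>2" using v by linarith
  qed (use \<delta> W v in \<open>auto intro: subgauss_bound_mono\<close>)
  then show "\<forall>\<^sub>F \<delta> in at_right 0. subexp_bound M (\<lambda>x. (W x)\<^sup>2 - v) (2 * (\<bar>t\<bar> + \<delta>)\<^sup>2)"
    by (auto intro: eventually_at_rightI[of 0 1])
qed simp

lemma subexp_bound_sq_centered_of_subgaussian:
  assumes W: "subgaussian M W" "(\<integral>x. W x \<partial>M) = 0" "subgauss_norm M W \<le> \<sigma>"
  shows "subexp_bound M (\<lambda>x. (W x)\<^sup>2 - (\<integral>x. (W x)\<^sup>2 \<partial>M)) (2 * \<sigma>\<^sup>2)"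
proof (rule subexp_bound_tendsto)
  show "((\<lambda>\<delta>. 2 * (\<sigma> + \<delta>)\<^sup>2) \<longlongrightarrow> 2 * \<sigma>\<^sup>2) (at_right 0)"
    by (rule tendsto_eq_intros refl | simp)+
  have "subexp_bound M (\<lambda>x. (W x)\<^sup>2 - (\<integral>x. (W x)\<^sup>2 \<partial>M)) (2 * (\<sigma> + \<delta>)\<^sup>2)" if "\<delta> > 0" for \<delta>
  proof -
    have Wt: "subgauss_bound M W (\<sigma> + \<delta>)" using W that by (intro subgaussian_imp_subgauss_bound) auto
    show ?thesis using subgauss_bound_second_moment[OF Wt] by (intro subexp_bound_sq_shift[OF Wt]) auto
  qed
  then show "\<forall>\<^sub>F \<delta> in at_right 0. subexp_bound M (\<lambda>x. (W x)\<^sup>2 - (\<integral>x. (W x)\<^sup>2 \<partial>M)) (2 * (\<sigma> + \<delta>)\<^sup>2)"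
    by (auto intro: eventually_at_rightI[of 0 1])
qed simp

end

section \<open>Quadratic forms in independent sub-gaussian variables\<close>

context prob_space
begin

lemma indep_vars_imp_indep_var:
  assumes ind: "indep_vars (\<lambda>_. borel) X I" and ab: "a \<in> I" "b \<in> I" "a \<noteq> b"
  shows "indep_var borel (X a) borel (X b)"
proof -
  have "indep_var (PiM {a} (\<lambda>_. borel)) (\<lambda>x. restrict (\<lambda>i. X i x) {a})
      (PiM {b} (\<lambda>_. borel)) (\<lambda>x. restrict (\<lambda>i. X i x) {b})"
    using ab by (intro indep_var_restrict[OF ind]) auto
  then have "indep_var borel ((\<lambda>f. f a) \<circ> (\<lambda>x. restrict (\<lambda>i. X i x) {a}))
      borel ((\<lambda>f. f b) \<circ> (\<lambda>x. restrict (\<lambda>i. X i x) {b}))"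
    by (rule indep_var_compose) auto
  then show ?thesis by (simp add: comp_def)
qed

lemma indep_vars_blocks:
  assumes ind: "indep_vars (\<lambda>_. borel) X I" and B: "\<And>j. j \<in> L \<Longrightarrow> B j \<subseteq> I"
    and disj: "disjoint_family_on B L"
    and F: "\<And>j. j \<in> L \<Longrightarrow> F j \<in> borel_measurable (PiM (B j) (\<lambda>_. borel))"
  shows "indep_vars (\<lambda>_. borel) (\<lambda>j x. F j (restrict (\<lambda>i. X i x) (B j))) L"
  using indep_vars_restrict[OF ind B disj] by (rule indep_vars_compose2) (use F in auto)

lemma integral_sum_sq_indep:
  fixes Y :: "'i \<Rightarrow> 'a \<Rightarrow> real"
  assumes I: "finite I" and ind: "indep_vars (\<lambda>_. borel) Y I"
    and sq: "\<And>i. i \<in> I \<Longrightarrow> integrable M (\<lambda>x. (Y i x)\<^sup>2)"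
    and mean: "\<And>i. i \<in> I \<Longrightarrow> (\<integral>x. Y i x \<partial>M) = 0"
  shows "integrable M (\<lambda>x. (\<Sum>i\<in>I. c i * Y i x)\<^sup>2)"
    and "(\<integral>x. (\<Sum>i\<in>I. c i * Y i x)\<^sup>2 \<partial>M) = (\<Sum>i\<in>I. (c i)\<^sup>2 * (\<integral>x. (Y i x)\<^sup>2 \<partial>M))"
proof -
  have [measurable]: "Y i \<in> borel_measurable M" if "i \<in> I" for i
    using ind that by (simp add: indep_vars_def)
  have IY: "integrable M (Y i)" if "i \<in> I" for i
    using that sq[OF that] by (intro square_integrable_imp_integrable[of "Y i"]) measurable
  have prod: "integrable M (\<lambda>x. Y i x * Y j x) \<and>
      (\<integral>x. Y i x * Y j x \<partial>M) = (if i = j then (\<integral>x. (Y i x)\<^sup>2 \<partial>M) else 0)"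
    if ij: "i \<in> I" "j \<in> I" for i j
  proof (cases "i = j")
    case True then show ?thesis using sq[OF ij(1)] by (simp add: power2_eq_square)
  next
    case False
    then have iv: "indep_var borel (Y i) borel (Y j)" using ij by (intro indep_vars_imp_indep_var[OF ind])
    show ?thesis
      using False indep_var_integrable[OF iv IY IY] indep_var_lebesgue_integral[OF iv IY IY] mean ij by simp
  qed
  have eq: "(\<Sum>i\<in>I. c i * Y i x)\<^sup>2 = (\<Sum>i\<in>I. \<Sum>j\<in>I. c i * c j * (Y i x * Y j x))" for x
    unfolding power2_eq_square sum_product by (simp add: algebra_simps)
  show "integrable M (\<lambda>x. (\<Sum>i\<in>I. c i * Y i x)\<^sup>2)" unfolding eq using prod by auto
  have "(\<integral>x. (\<Sum>i\<in>I. c i * Y i x)\<^sup>2 \<partial>M) = (\<Sum>i\<in>I. \<Sum>j\<in>I. c i * c j * (\<integral>x. Y i x * Y j x \<partial>M))"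
    unfolding eq using prod by (simp add: Bochner_Integration.integral_sum Bochner_Integration.integrable_sum)
  also have "\<dots> = (\<Sum>i\<in>I. \<Sum>j\<in>I. c i * c j * (if i = j then (\<integral>x. (Y i x)\<^sup>2 \<partial>M) else 0))"
    using prod by (intro sum.cong refl) presburger
  also have "\<dots> = (\<Sum>i\<in>I. (c i)\<^sup>2 * (\<integral>x. (Y i x)\<^sup>2 \<partial>M))"
    using I by (simp add: if_distrib power2_eq_square cong: if_cong)
  finally show "(\<integral>x. (\<Sum>i\<in>I. c i * Y i x)\<^sup>2 \<partial>M) = (\<Sum>i\<in>I. (c i)\<^sup>2 * (\<integral>x. (Y i x)\<^sup>2 \<partial>M))" .
qed

lemma subexp_bound_offdiag:
  assumes I: "finite I" and ind: "indep_vars (\<lambda>_. borel) B I"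
    and B: "\<And>i. i \<in> I \<Longrightarrow> subgauss_bound M (B i) t"
  shows "subexp_bound M (\<lambda>x. (\<Sum>i\<in>I. c i * B i x)\<^sup>2 - (\<Sum>i\<in>I. (c i * B i x)\<^sup>2))
    (3 * t\<^sup>2 * (\<Sum>i\<in>I. (c i)\<^sup>2))"
proof -
  define G where "G = (\<Sum>i\<in>I. (c i)\<^sup>2)"
  have G: "G \<ge> 0" unfolding G_def by (simp add: sum_nonneg)
  have [measurable]: "i \<in> I \<Longrightarrow> B i \<in> borel_measurable M" for i using B by measurable
  have Z: "subgauss_bound M (\<lambda>x. \<Sum>i\<in>I. c i * B i x) (t * sqrt G)"
    unfolding G_def by (rule subgauss_bound_lincomb[OF I ind B])
  have ZZ: "subexp_bound M (\<lambda>x. (\<Sum>i\<in>I. c i * B i x)\<^sup>2) (2 * t\<^sup>2 * G)"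
    using subexp_bound_sq_shift[OF Z, of 0] G by (simp add: power_mult_distrib mult.assoc)
  have "subexp_bound M (\<lambda>x. \<Sum>i\<in>I. (c i)\<^sup>2 * ((B i x)\<^sup>2 - 0)) (\<Sum>i\<in>I. \<bar>(c i)\<^sup>2\<bar> * (2 * t\<^sup>2))"
    using B by (intro subexp_bound_sum[OF I] subexp_bound_scale subexp_bound_sq_shift) auto
  moreover have "(\<Sum>i\<in>I. \<bar>(c i)\<^sup>2\<bar> * (2 * t\<^sup>2)) = 2 * t\<^sup>2 * G"
    by (simp add: G_def sum_distrib_right[symmetric] mult.commute)
  ultimately have SS: "subexp_bound M (\<lambda>x. \<Sum>i\<in>I. (c i * B i x)\<^sup>2) (2 * t\<^sup>2 * G)"
    by (simp add: power_mult_distrib)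
  have EZ: "(\<integral>x. (\<Sum>i\<in>I. c i * B i x)\<^sup>2 \<partial>M) \<le> t\<^sup>2 * G"
    using subgauss_bound_second_moment[OF Z] G by (simp add: power_mult_distrib)
  have "(\<integral>x. (\<Sum>i\<in>I. (c i * B i x)\<^sup>2) \<partial>M) = (\<Sum>i\<in>I. (c i)\<^sup>2 * (\<integral>x. (B i x)\<^sup>2 \<partial>M))"
    using subgauss_bound_integrable_sq[OF B]
    by (simp add: power_mult_distrib Bochner_Integration.integral_sum)
  also have "\<dots> \<le> (\<Sum>i\<in>I. (c i)\<^sup>2 * t\<^sup>2)"
    using subgauss_bound_second_moment[OF B] by (intro sum_mono mult_left_mono) auto
  finally have ES: "(\<integral>x. (\<Sum>i\<in>I. (c i * B i x)\<^sup>2) \<partial>M) \<le> t\<^sup>2 * G"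
    by (simp add: G_def sum_distrib_left mult.commute)
  show ?thesis unfolding G_def[symmetric]
    by (rule subexp_bound_diff_nonneg[OF ZZ SS])
      (use EZ ES mult_nonneg_nonneg[OF zero_le_power2[of t] G] in \<open>auto intro: sum_nonneg\<close>)
qed

lemma integral_noisy_offdiag:
  fixes Y :: "'i \<Rightarrow> 'a \<Rightarrow> real" and d :: "'i \<Rightarrow> real"
  assumes J: "finite J" and n: "n \<notin> J" and ind: "indep_vars (\<lambda>_. borel) Y (insert n J)"
    and sq: "\<And>i. i \<in> insert n J \<Longrightarrow> integrable M (\<lambda>x. (Y i x)\<^sup>2)"
    and mean: "\<And>i. i \<in> insert n J \<Longrightarrow> (\<integral>x. Y i x \<partial>M) = 0"
  defines "H \<equiv> \<lambda>x. (Y n x + (\<Sum>j\<in>J. d j * Y j x))\<^sup>2 - (\<Sum>j\<in>J. (d j * Y j x)\<^sup>2)"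
  shows "integrable M H" and "(\<integral>x. H x \<partial>M) = (\<integral>x. (Y n x)\<^sup>2 \<partial>M)"
proof -
  define S where "S x = (\<Sum>j\<in>J. (d j * Y j x)\<^sup>2)" for x
  have J': "finite (insert n J)" using J by simp
  note Q = integral_sum_sq_indep[OF J' ind sq mean, of "d(n := 1)"]
  have sum_c: "(\<Sum>i\<in>insert n J. (d(n := 1)) i * Y i x) = Y n x + (\<Sum>j\<in>J. d j * Y j x)" for x
    using J n by (auto intro!: sum.cong)
  have IS: "integrable M S" and ES: "(\<integral>x. S x \<partial>M) = (\<Sum>j\<in>J. (d j)\<^sup>2 * (\<integral>x. (Y j x)\<^sup>2 \<partial>M))"
    unfolding S_def[abs_def] using sq by (auto simp: power_mult_distrib Bochner_Integration.integral_sum)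
  have H_eq: "H = (\<lambda>x. (\<Sum>i\<in>insert n J. (d(n := 1)) i * Y i x)\<^sup>2 - S x)"
    unfolding sum_c by (simp add: H_def S_def)
  show "integrable M H"
    unfolding H_eq using Q(1) IS by (rule Bochner_Integration.integrable_diff)
  have "(\<integral>x. H x \<partial>M) = (\<integral>x. (\<Sum>i\<in>insert n J. (d(n := 1)) i * Y i x)\<^sup>2 \<partial>M) - (\<integral>x. S x \<partial>M)"
    unfolding H_eq using Q(1) IS by (rule Bochner_Integration.integral_diff)
  also have "\<dots> = (\<integral>x. (Y n x)\<^sup>2 \<partial>M) + (\<Sum>j\<in>J. ((d(n := 1)) j)\<^sup>2 * (\<integral>x. (Y j x)\<^sup>2 \<partial>M))
      - (\<Sum>j\<in>J. (d j)\<^sup>2 * (\<integral>x. (Y j x)\<^sup>2 \<partial>M))"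
    using J n by (simp only: Q(2) ES sum.insert) simp
  also have "(\<Sum>j\<in>J. ((d(n := 1)) j)\<^sup>2 * (\<integral>x. (Y j x)\<^sup>2 \<partial>M)) = (\<Sum>j\<in>J. (d j)\<^sup>2 * (\<integral>x. (Y j x)\<^sup>2 \<partial>M))"
    using n by (intro sum.cong) auto
  finally show "(\<integral>x. H x \<partial>M) = (\<integral>x. (Y n x)\<^sup>2 \<partial>M)" by simp
qed

text \<open>With \<open>Z = \<Sum>j. d j Y j\<close> and \<open>N = Y n\<close>, centering leaves
  \<open>H - E H = (Z\<^sup>2 - \<Sum>j. (d j Y j)\<^sup>2) + 2 N Z + (N\<^sup>2 - E N\<^sup>2)\<close>,
  and the three summands are bounded separately.\<close>
lemma subexp_bound_noisy_offdiag:
  fixes Y :: "'i \<Rightarrow> 'a \<Rightarrow> real" and d :: "'i \<Rightarrow> real"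
  assumes J: "finite J" and n: "n \<notin> J" and ind: "indep_vars (\<lambda>_. borel) Y (insert n J)"
    and Y: "\<And>j. j \<in> J \<Longrightarrow> subgauss_bound M (Y j) t" and N: "subgauss_bound M (Y n) \<nu>"
    and t: "t \<ge> 0" and \<nu>: "\<nu> \<ge> 0"
  defines "H \<equiv> \<lambda>x. (Y n x + (\<Sum>j\<in>J. d j * Y j x))\<^sup>2 - (\<Sum>j\<in>J. (d j * Y j x)\<^sup>2)"
  shows "integrable M H"
    and "subexp_bound M (\<lambda>x. H x - (\<integral>x. H x \<partial>M))
      (3 * t\<^sup>2 * (\<Sum>j\<in>J. (d j)\<^sup>2) + 4 * \<nu> * t * sqrt (\<Sum>j\<in>J. (d j)\<^sup>2) + 2 * \<nu>\<^sup>2)"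
proof -
  define G where "G = (\<Sum>j\<in>J. (d j)\<^sup>2)"
  define Z where "Z x = (\<Sum>j\<in>J. d j * Y j x)" for x
  have G: "G \<ge> 0" unfolding G_def by (simp add: sum_nonneg)
  have YN: "subgauss_bound M (Y i) (if i = n then \<nu> else t)" if "i \<in> insert n J" for i
    using that Y N n by auto
  have [measurable]: "i \<in> insert n J \<Longrightarrow> Y i \<in> borel_measurable M" for i using YN by measurable
  have [measurable]: "Z \<in> borel_measurable M" unfolding Z_def[abs_def] by measurable
  have indJ: "indep_vars (\<lambda>_. borel) Y J" using ind by (rule indep_vars_subset) auto
  note mean = integral_noisy_offdiag[OF J n ind subgauss_bound_integrable_sq[OF YN] subgauss_bound_mean_zero[OF YN]]
  show IH: "integrable M H" unfolding H_def by (rule mean(1))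
  have EH: "(\<integral>x. H x \<partial>M) = (\<integral>x. (Y n x)\<^sup>2 \<partial>M)" unfolding H_def by (rule mean(2))
  have ZZ: "subexp_bound M (\<lambda>x. (Z x)\<^sup>2) (2 * t\<^sup>2 * G)"
    using subexp_bound_sq_shift[OF subgauss_bound_lincomb[OF J indJ Y, of d], of 0] G
    by (simp add: Z_def G_def power_mult_distrib mult.assoc)
  have NN: "subexp_bound M (\<lambda>x. (Y n x)\<^sup>2) (2 * \<nu>\<^sup>2)"
    using subexp_bound_sq_shift[OF N, of 0] by simp
  have A: "subexp_bound M (\<lambda>x. (Z x)\<^sup>2 - (\<Sum>j\<in>J. (d j * Y j x)\<^sup>2)) (3 * t\<^sup>2 * G)"
    unfolding Z_def G_def by (rule subexp_bound_offdiag[OF J indJ Y])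
  have "subexp_bound M (\<lambda>x. 2 * (Y n x * Z x)) (\<bar>2\<bar> * sqrt (2 * \<nu>\<^sup>2 * (2 * t\<^sup>2 * G)))"
    by (intro subexp_bound_scale subexp_bound_mult NN ZZ) measurable
  moreover have "\<bar>2\<bar> * sqrt (2 * \<nu>\<^sup>2 * (2 * t\<^sup>2 * G)) = 4 * \<nu> * t * sqrt G"
    using t \<nu> G by (simp add: real_sqrt_mult)
  ultimately have NZ: "subexp_bound M (\<lambda>x. 2 * (Y n x * Z x)) (4 * \<nu> * t * sqrt G)"
    by (simp add: mult.assoc)
  have NC: "subexp_bound M (\<lambda>x. (Y n x)\<^sup>2 - (\<integral>x. (Y n x)\<^sup>2 \<partial>M)) (2 * \<nu>\<^sup>2)"
    using subgauss_bound_second_moment[OF N] by (intro subexp_bound_sq_shift[OF N]) auto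
  have "subexp_bound M (\<lambda>x. ((Z x)\<^sup>2 - (\<Sum>j\<in>J. (d j * Y j x)\<^sup>2)) + 2 * (Y n x * Z x)
      + ((Y n x)\<^sup>2 - (\<integral>x. (Y n x)\<^sup>2 \<partial>M))) (3 * t\<^sup>2 * G + 4 * \<nu> * t * sqrt G + 2 * \<nu>\<^sup>2)"
    by (intro subexp_bound_add A NZ NC)
  then show "subexp_bound M (\<lambda>x. H x - (\<integral>x. H x \<partial>M)) (3 * t\<^sup>2 * G + 4 * \<nu> * t * sqrt G + 2 * \<nu>\<^sup>2)"
  proof (rule subexp_bound_cong)
    show "(\<lambda>x. H x - (\<integral>x. H x \<partial>M)) \<in> borel_measurable M" using IH by measurable
  qed (unfold EH, simp add: H_def Z_def power2_sum algebra_simps)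
qed

lemma AE_sign_of_measure_half:
  fixes U :: "'a \<Rightarrow> real"
  assumes U: "U \<in> borel_measurable M"
    and d: "measure M {x \<in> space M. U x = 1} = 1/2" "measure M {x \<in> space M. U x = -1} = 1/2"
  shows "AE x in M. U x = 1 \<or> U x = -1"
proof -
  have [measurable]: "{x \<in> space M. U x = c} \<in> sets M" for c
  proof -
    have "U -` {c} \<inter> space M \<in> sets M" using U by (rule measurable_sets) simp
    also have "U -` {c} \<inter> space M = {x \<in> space M. U x = c}" by auto
    finally show ?thesis .
  qed
  have "prob ({x \<in> space M. U x = 1} \<union> {x \<in> space M. U x = -1}) = 1"
    using d by (subst finite_measure_Union) auto
  then have "AE x in M. x \<in> {x \<in> space M. U x = 1} \<union> {x \<in> space M. U x = -1}" by (rule AE_prob_1)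
  then show ?thesis by eventually_elim auto
qed

text \<open>One half (real or imaginary part) of the effective noise, with the noise sample \<open>X n\<close> and the
  signed fading coefficients \<open>X (u j) X (h j)\<close> taken from disjoint blocks of one independent family.\<close>
lemma subexp_bound_signed_noisy_offdiag:
  fixes X :: "'i \<Rightarrow> 'a \<Rightarrow> real" and u h :: "nat \<Rightarrow> 'i" and d :: "nat \<Rightarrow> real"
  assumes J: "finite J" "0 \<notin> J" and ind: "indep_vars (\<lambda>_. borel) X I"
    and n: "n \<in> I" and uh: "\<And>j. j \<in> J \<Longrightarrow> u j \<in> I \<and> h j \<in> I \<and> u j \<noteq> h j"
    and disj: "disjoint_family_on (\<lambda>j. if j = 0 then {n} else {u j, h j}) (insert 0 J)"
    and U: "\<And>j. j \<in> J \<Longrightarrow> AE x in M. X (u j) x = 1 \<or> X (u j) x = -1"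
    and H: "\<And>j. j \<in> J \<Longrightarrow> subgauss_bound M (X (h j)) t" and N: "subgauss_bound M (X n) \<nu>"
    and t: "t \<ge> 0" and \<nu>: "\<nu> \<ge> 0"
  defines "Q \<equiv> \<lambda>x. (X n x + (\<Sum>j\<in>J. d j * (X (u j) x * X (h j) x)))\<^sup>2
    - (\<Sum>j\<in>J. (d j * (X (u j) x * X (h j) x))\<^sup>2)"
  shows "integrable M Q"
    and "subexp_bound M (\<lambda>x. Q x - (\<integral>x. Q x \<partial>M))
      (3 * t\<^sup>2 * (\<Sum>j\<in>J. (d j)\<^sup>2) + 4 * \<nu> * t * sqrt (\<Sum>j\<in>J. (d j)\<^sup>2) + 2 * \<nu>\<^sup>2)"
proof -
  define Y where "Y j x = (if j = 0 then X n x else X (u j) x * X (h j) x)" for j x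
  have [measurable]: "i \<in> I \<Longrightarrow> X i \<in> borel_measurable M" for i using ind by (simp add: indep_vars_def)
  have blocks: "indep_vars (\<lambda>_. borel) (\<lambda>j x. (if j = 0 then (\<lambda>f. f n) else (\<lambda>f. f (u j) * f (h j)))
      (restrict (\<lambda>i. X i x) (if j = 0 then {n} else {u j, h j}))) (insert 0 J)"
    using n uh by (intro indep_vars_blocks[OF ind _ disj]) auto
  have indY: "indep_vars (\<lambda>_. borel) Y (insert 0 J)"
    by (rule indep_vars_cong[THEN iffD1, OF refl _ _ blocks]) (auto simp: Y_def fun_eq_iff)
  have Ysg: "subgauss_bound M (Y j) t" if j: "j \<in> J" for j
  proof -
    have iv: "indep_var borel (X (u j)) borel (X (h j))"
      using uh[OF j] by (intro indep_vars_imp_indep_var[OF ind]) auto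
    have "subgauss_bound M (\<lambda>x. X (u j) x * X (h j) x) t"
      using uh[OF j] by (intro subgauss_bound_sign_mult[OF _ U[OF j] iv H[OF j]]) measurable
    moreover have "Y j = (\<lambda>x. X (u j) x * X (h j) x)" using J(2) j by (metis Y_def)
    ultimately show ?thesis by simp
  qed
  have YN: "Y 0 = X n" by (simp add: Y_def[abs_def])
  have YJ: "Y j x = X (u j) x * X (h j) x" if "j \<in> J" for j x
    using J(2) that by (metis Y_def)
  have Q_eq: "Q = (\<lambda>x. (Y 0 x + (\<Sum>j\<in>J. d j * Y j x))\<^sup>2 - (\<Sum>j\<in>J. (d j * Y j x)\<^sup>2))"
    unfolding Q_def YN using YJ by (simp cong: sum.cong)
  have N0: "subgauss_bound M (Y 0) \<nu>" using N by (simp add: YN)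
  show "integrable M Q"
    unfolding Q_eq using Ysg N0 t \<nu> by (rule subexp_bound_noisy_offdiag(1)[OF J indY])
  show "subexp_bound M (\<lambda>x. Q x - (\<integral>x. Q x \<partial>M))
      (3 * t\<^sup>2 * (\<Sum>j\<in>J. (d j)\<^sup>2) + 4 * \<nu> * t * sqrt (\<Sum>j\<in>J. (d j)\<^sup>2) + 2 * \<nu>\<^sup>2)"
    unfolding Q_eq using Ysg N0 t \<nu> by (rule subexp_bound_noisy_offdiag(2)[OF J indY])
qed

end

section \<open>The effective noise\<close>

lemma Re_Nbar_eq:
  fixes Hr Hi U :: "nat \<Rightarrow> nat \<Rightarrow> 'a \<Rightarrow> real" and Nr Ni :: "nat \<Rightarrow> 'a \<Rightarrow> real"
    and K :: nat and S :: "nat \<Rightarrow> real set" and f :: "nat \<Rightarrow> real \<Rightarrow> real" and P :: real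
    and s :: "nat \<Rightarrow> real"
  defines "d \<equiv> \<lambda>k. sqrt (gfun K S f P k (f k (s k)))"
  shows "Re (Nbar K S f P Hr Hi Nr Ni U s m x) =
      (Nr m x + (\<Sum>k=1..K. d k * (U k m x * Hr k m x)))\<^sup>2 - (\<Sum>k=1..K. (d k * (U k m x * Hr k m x))\<^sup>2)
    + ((Ni m x + (\<Sum>k=1..K. d k * (U k m x * Hi k m x)))\<^sup>2 - (\<Sum>k=1..K. (d k * (U k m x * Hi k m x))\<^sup>2))"
proof -
  define ar where "ar k = d k * (U k m x * Hr k m x)" for k
  define ai where "ai k = d k * (U k m x * Hi k m x)" for k
  have T1: "Re (\<Sum>k\<in>{1..K}. \<Sum>l\<in>{1..K}-{k}.
        complex_of_real (sqrt (gfun K S f P k (f k (s k)) * gfun K S f P l (f l (s l))))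
        * Hc Hr Hi k m x * cnj (Hc Hr Hi l m x) * complex_of_real (U k m x * U l m x))
      = (\<Sum>k\<in>{1..K}. \<Sum>l\<in>{1..K}-{k}. ar k * ar l) + (\<Sum>k\<in>{1..K}. \<Sum>l\<in>{1..K}-{k}. ai k * ai l)"
    by (simp add: Re_sum sum.distrib[symmetric] real_sqrt_mult Hc_def ar_def ai_def d_def algebra_simps)
  have T2: "Re (cnj (Nc Nr Ni m x) * (\<Sum>k=1..K. complex_of_real (sqrt (gfun K S f P k (f k (s k))))
        * Hc Hr Hi k m x * complex_of_real (U k m x)))
      = Nr m x * (\<Sum>k\<in>{1..K}. ar k) + Ni m x * (\<Sum>k\<in>{1..K}. ai k)"
    by (simp add: Re_sum sum_distrib_left sum.distrib[symmetric] Hc_def Nc_def ar_def ai_def d_def algebra_simps)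
  have T3: "(cmod (Nc Nr Ni m x))\<^sup>2 = (Nr m x)\<^sup>2 + (Ni m x)\<^sup>2"
    by (simp add: Nc_def cmod_power2)
  have "Re (Nbar K S f P Hr Hi Nr Ni U s m x) =
      (Nr m x + (\<Sum>k=1..K. ar k))\<^sup>2 - (\<Sum>k=1..K. (ar k)\<^sup>2) + ((Ni m x + (\<Sum>k=1..K. ai k))\<^sup>2 - (\<Sum>k=1..K. (ai k)\<^sup>2))"
    unfolding Nbar_def plus_complex.sel(1) Re_complex_of_real T1 T2 T3 sum_offdiag_products[OF finite_atLeastAtMost]
    by (simp add: power2_sum algebra_simps)
  then show ?thesis by (simp add: ar_def ai_def)
qed

lemma sum_sq_sqrt_gfun_le_rel_spread:
  assumes s: "\<And>k. k \<in> {1..K} \<Longrightarrow> s k \<in> S k" and bdd: "\<And>k. k \<in> {1..K} \<Longrightarrow> bounded (f k ` S k)"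
    and P: "P > 0" and D: "Delta K S f > 0"
  shows "(\<Sum>k=1..K. (sqrt (gfun K S f P k (f k (s k))))\<^sup>2) \<le> rel_spread K S f P"
proof -
  have PD: "P / Delta K S f > 0" using P D by simp
  have "(sqrt (gfun K S f P k (f k (s k))))\<^sup>2 \<le> P / Delta K S f * (phi_max S f k - phi_min S f k)"
    if k: "k \<in> {1..K}" for k
  proof -
    have "phi_min S f k \<le> f k (s k)"
      unfolding phi_min_def using s[OF k] bounded_imp_bdd_below[OF bdd[OF k]] by (intro cInf_lower) auto
    then have "0 \<le> gfun K S f P k (f k (s k))" unfolding gfun_def using PD by (intro mult_nonneg_nonneg) auto
    moreover have "f k (s k) \<le> phi_max S f k"
      unfolding phi_max_def using s[OF k] bounded_imp_bdd_above[OF bdd[OF k]] by (intro cSup_upper) auto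
    then have "gfun K S f P k (f k (s k)) \<le> P / Delta K S f * (phi_max S f k - phi_min S f k)"
      unfolding gfun_def using PD by (intro mult_left_mono) auto
    ultimately show ?thesis by simp
  qed
  then have "(\<Sum>k=1..K. (sqrt (gfun K S f P k (f k (s k))))\<^sup>2)
      \<le> (\<Sum>k=1..K. P / Delta K S f * (phi_max S f k - phi_min S f k))"
    by (intro sum_mono) auto
  also have "\<dots> = rel_spread K S f P"
    unfolding rel_spread_def Delta_bar_def by (simp add: sum_distrib_left sum_divide_distrib)
  finally show ?thesis .
qed

context prob_space
begin

lemma Re_Nbar_subexp_bound:
  fixes Hr Hi U :: "nat \<Rightarrow> nat \<Rightarrow> 'a \<Rightarrow> real" and Nr Ni :: "nat \<Rightarrow> 'a \<Rightarrow> real"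
    and S :: "nat \<Rightarrow> real set" and f :: "nat \<Rightarrow> real \<Rightarrow> real" and P :: real and s :: "nat \<Rightarrow> real"
  assumes ind: "indep_vars (\<lambda>_. borel) (rv_family Hr Hi Nr Ni U) (rv_index K L)" and m: "m \<in> {1..L}"
    and U: "\<And>k. k \<in> {1..K} \<Longrightarrow> AE x in M. U k m x = 1 \<or> U k m x = -1"
    and H: "\<And>k. k \<in> {1..K} \<Longrightarrow> subgauss_bound M (Hr k m) t \<and> subgauss_bound M (Hi k m) t"
    and N: "subgauss_bound M (Nr m) \<nu>" "subgauss_bound M (Ni m) \<nu>" and t: "t \<ge> 0" and \<nu>: "\<nu> \<ge> 0"
  defines "X \<equiv> \<lambda>x. Re (Nbar K S f P Hr Hi Nr Ni U s m x)"
    and "G \<equiv> \<Sum>k=1..K. (sqrt (gfun K S f P k (f k (s k))))\<^sup>2"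
  shows "integrable M X"
    and "subexp_bound M (\<lambda>x. X x - (\<integral>x. X x \<partial>M)) (6 * t\<^sup>2 * G + 8 * \<nu> * t * sqrt G + 4 * \<nu>\<^sup>2)"
proof -
  define d where "d k = sqrt (gfun K S f P k (f k (s k)))" for k
  have J: "finite {1..K}" "(0::nat) \<notin> {1..K}" by auto
  have idx: "INr m \<in> rv_index K L" "INi m \<in> rv_index K L"
    "\<And>k. k \<in> {1..K} \<Longrightarrow> IU k m \<in> rv_index K L \<and> IHr k m \<in> rv_index K L \<and> IU k m \<noteq> IHr k m"
    "\<And>k. k \<in> {1..K} \<Longrightarrow> IU k m \<in> rv_index K L \<and> IHi k m \<in> rv_index K L \<and> IU k m \<noteq> IHi k m"
    using m by (auto simp: rv_index_def)
  have disj: "disjoint_family_on (\<lambda>j. if j = 0 then {INr m} else {IU j m, IHr j m}) (insert 0 {1..K})"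
    "disjoint_family_on (\<lambda>j. if j = 0 then {INi m} else {IU j m, IHi j m}) (insert 0 {1..K})"
    by (auto simp: disjoint_family_on_def)
  note re = subexp_bound_signed_noisy_offdiag[OF J ind idx(1,3) disj(1), of t \<nu> d]
  note im = subexp_bound_signed_noisy_offdiag[OF J ind idx(2,4) disj(2), of t \<nu> d]
  have X_eq: "X = (\<lambda>x. ((Nr m x + (\<Sum>k=1..K. d k * (U k m x * Hr k m x)))\<^sup>2 - (\<Sum>k=1..K. (d k * (U k m x * Hr k m x))\<^sup>2))
      + ((Ni m x + (\<Sum>k=1..K. d k * (U k m x * Hi k m x)))\<^sup>2 - (\<Sum>k=1..K. (d k * (U k m x * Hi k m x))\<^sup>2)))"
    by (simp add: X_def d_def Re_Nbar_eq fun_eq_iff)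
  show "integrable M X" unfolding X_eq using re(1) im(1) U H N t \<nu> by simp
  have "subexp_bound M (\<lambda>x. X x - (\<integral>x. X x \<partial>M))
      ((3 * t\<^sup>2 * G + 4 * \<nu> * t * sqrt G + 2 * \<nu>\<^sup>2) + (3 * t\<^sup>2 * G + 4 * \<nu> * t * sqrt G + 2 * \<nu>\<^sup>2))"
    unfolding X_eq G_def d_def[symmetric] using re im U H N t \<nu> by (intro subexp_bound_centered_add) simp_all
  then show "subexp_bound M (\<lambda>x. X x - (\<integral>x. X x \<partial>M)) (6 * t\<^sup>2 * G + 8 * \<nu> * t * sqrt G + 4 * \<nu>\<^sup>2)"
    by (simp add: algebra_simps)
qed

lemma Re_Nbar_centered_subexp_bound:
  fixes Hr Hi U :: "nat \<Rightarrow> nat \<Rightarrow> 'a \<Rightarrow> real" and Nr Ni :: "nat \<Rightarrow> 'a \<Rightarrow> real"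
    and S :: "nat \<Rightarrow> real set" and f :: "nat \<Rightarrow> real \<Rightarrow> real" and P :: real and s :: "nat \<Rightarrow> real"
  assumes ind: "indep_vars (\<lambda>_. borel) (rv_family Hr Hi Nr Ni U) (rv_index K L)" and m: "m \<in> {1..L}"
    and U: "\<And>k. k \<in> {1..K} \<Longrightarrow> AE x in M. U k m x = 1 \<or> U k m x = -1"
    and H: "\<And>k t. k \<in> {1..K} \<Longrightarrow> \<sigma>F < t \<Longrightarrow> subgauss_bound M (Hr k m) t \<and> subgauss_bound M (Hi k m) t"
    and N: "\<And>\<nu>. \<sigma>N < \<nu> \<Longrightarrow> subgauss_bound M (Nr m) \<nu> \<and> subgauss_bound M (Ni m) \<nu>"
    and \<sigma>: "\<sigma>F \<ge> 0" "\<sigma>N \<ge> 0"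
  defines "X \<equiv> \<lambda>x. Re (Nbar K S f P Hr Hi Nr Ni U s m x)"
    and "G \<equiv> \<Sum>k=1..K. (sqrt (gfun K S f P k (f k (s k))))\<^sup>2"
  shows "integrable M X"
    and "subexp_bound M (\<lambda>x. X x - (\<integral>x. X x \<partial>M))
      (6 * \<sigma>F\<^sup>2 * G + 8 * \<sigma>N * \<sigma>F * sqrt G + 4 * \<sigma>N\<^sup>2)"
proof -
  have bound: "integrable M X \<and> subexp_bound M (\<lambda>x. X x - (\<integral>x. X x \<partial>M))
      (6 * (\<sigma>F + \<delta>)\<^sup>2 * G + 8 * (\<sigma>N + \<delta>) * (\<sigma>F + \<delta>) * sqrt G + 4 * (\<sigma>N + \<delta>)\<^sup>2)" if "\<delta> > 0" for \<delta>
    unfolding X_def G_def using that H N \<sigma>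
    by (intro conjI Re_Nbar_subexp_bound[OF ind m U, where t = "\<sigma>F + \<delta>" and \<nu> = "\<sigma>N + \<delta>"]) auto
  show "integrable M X" using bound[of 1] by simp
  show "subexp_bound M (\<lambda>x. X x - (\<integral>x. X x \<partial>M)) (6 * \<sigma>F\<^sup>2 * G + 8 * \<sigma>N * \<sigma>F * sqrt G + 4 * \<sigma>N\<^sup>2)"
  proof (rule subexp_bound_tendsto)
    show "((\<lambda>\<delta>. 6 * (\<sigma>F + \<delta>)\<^sup>2 * G + 8 * (\<sigma>N + \<delta>) * (\<sigma>F + \<delta>) * sqrt G + 4 * (\<sigma>N + \<delta>)\<^sup>2)
        \<longlongrightarrow> 6 * \<sigma>F\<^sup>2 * G + 8 * \<sigma>N * \<sigma>F * sqrt G + 4 * \<sigma>N\<^sup>2) (at_right 0)"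
      by (rule tendsto_eq_intros refl | simp)+
    show "\<forall>\<^sub>F \<delta> in at_right 0. subexp_bound M (\<lambda>x. X x - (\<integral>x. X x \<partial>M))
        (6 * (\<sigma>F + \<delta>)\<^sup>2 * G + 8 * (\<sigma>N + \<delta>) * (\<sigma>F + \<delta>) * sqrt G + 4 * (\<sigma>N + \<delta>)\<^sup>2)"
      using bound by (auto intro: eventually_at_rightI[of 0 1])
  qed simp
qed

end

theorem lemma2:
  fixes \<Omega> :: "'a measure"
    and K M :: nat and P \<sigma>F \<sigma>N :: real
    and Hr Hi U :: "nat \<Rightarrow> nat \<Rightarrow> 'a \<Rightarrow> real"
    and Nr Ni :: "nat \<Rightarrow> 'a \<Rightarrow> real"
    and S :: "nat \<Rightarrow> real set" and f :: "nat \<Rightarrow> real \<Rightarrow> real"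
  assumes prob: "prob_space \<Omega>"
    and K1: "K \<ge> 1" and M1: "M \<ge> 1"
    and Ppos: "P > 0" and sF: "\<sigma>F \<ge> 0" and sN: "\<sigma>N \<ge> 0"
    and H_sg: "\<And>k m. k \<in> {1..K} \<Longrightarrow> m \<in> {1..M} \<Longrightarrow>
        subgaussian \<Omega> (Hr k m) \<and> subgaussian \<Omega> (Hi k m)"
    and H_mean: "\<And>k m. k \<in> {1..K} \<Longrightarrow> m \<in> {1..M} \<Longrightarrow>
        integral\<^sup>L \<Omega> (Hr k m) = 0 \<and> integral\<^sup>L \<Omega> (Hi k m) = 0"
    and H_var: "\<And>k m. k \<in> {1..K} \<Longrightarrow> m \<in> {1..M} \<Longrightarrow>
        integrable \<Omega> (\<lambda>x. (Hr k m x)\<^sup>2) \<and> integrable \<Omega> (\<lambda>x. (Hi k m x)\<^sup>2) \<and>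
        integral\<^sup>L \<Omega> (\<lambda>x. (Hr k m x)\<^sup>2) = 1 \<and> integral\<^sup>L \<Omega> (\<lambda>x. (Hi k m x)\<^sup>2) = 1"
    and H_tau: "\<And>k m. k \<in> {1..K} \<Longrightarrow> m \<in> {1..M} \<Longrightarrow>
        max (subgauss_norm \<Omega> (Hr k m)) (subgauss_norm \<Omega> (Hi k m)) \<le> \<sigma>F"
    and N_sg: "\<And>m. m \<in> {1..M} \<Longrightarrow> subgaussian \<Omega> (Nr m) \<and> subgaussian \<Omega> (Ni m)"
    and N_mean: "\<And>m. m \<in> {1..M} \<Longrightarrow>
        integral\<^sup>L \<Omega> (Nr m) = 0 \<and> integral\<^sup>L \<Omega> (Ni m) = 0"
    and N_tau: "\<And>m. m \<in> {1..M} \<Longrightarrow>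
        max (subgauss_norm \<Omega> (Nr m)) (subgauss_norm \<Omega> (Ni m)) \<le> \<sigma>N"
    and U_rv: "\<And>k m. k \<in> {1..K} \<Longrightarrow> m \<in> {1..M} \<Longrightarrow> U k m \<in> borel_measurable \<Omega>"
    and U_dist: "\<And>k m. k \<in> {1..K} \<Longrightarrow> m \<in> {1..M} \<Longrightarrow>
        measure \<Omega> {x \<in> space \<Omega>. U k m x = 1} = 1/2 \<and>
        measure \<Omega> {x \<in> space \<Omega>. U k m x = -1} = 1/2"
    and indep: "prob_space.indep_vars \<Omega> (\<lambda>_. borel) (rv_family Hr Hi Nr Ni U) (rv_index K M)"
    and S_closed: "\<And>k. k \<in> {1..K} \<Longrightarrow> closed (S k)"
    and f_bdd: "\<And>k. k \<in> {1..K} \<Longrightarrow> bounded (f k ` S k)"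
    and f_meas: "\<And>k. k \<in> {1..K} \<Longrightarrow> f k \<in> borel_measurable (restrict_space borel (S k))"
    and Delta_pos: "Delta K S f > 0"
  shows "(\<forall>k\<in>{1..K}. \<forall>m\<in>{1..M}.
            subexponential \<Omega> (\<lambda>x. (Hr k m x)\<^sup>2 - 1) \<and>
            subexponential \<Omega> (\<lambda>x. (Hi k m x)\<^sup>2 - 1) \<and>
            subexp_norm \<Omega> (\<lambda>x. (Hr k m x)\<^sup>2 - 1) \<le> ereal (2 * \<sigma>F\<^sup>2) \<and>
            subexp_norm \<Omega> (\<lambda>x. (Hi k m x)\<^sup>2 - 1) \<le> ereal (2 * \<sigma>F\<^sup>2))
       \<and> (\<forall>s::nat \<Rightarrow> real. (\<forall>k\<in>{1..K}. s k \<in> S k) \<longrightarrow> (\<forall>m\<in>{1..M}.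
            let X = (\<lambda>x. Re (Nbar K S f P Hr Hi Nr Ni U s m x)) in
            subexponential \<Omega> X \<and>
            subexp_norm \<Omega> (\<lambda>x. X x - integral\<^sup>L \<Omega> X) \<le>
              ereal (6 * \<sigma>F\<^sup>2 * rel_spread K S f P
                     + 8 * \<sigma>N * \<sigma>F * sqrt (rel_spread K S f P) + 4 * \<sigma>N\<^sup>2)))"
proof -
  interpret prob_space \<Omega> by (rule prob)
  have U: "AE x in \<Omega>. U k m x = 1 \<or> U k m x = -1" if "k \<in> {1..K}" "m \<in> {1..M}" for k m
    using U_dist[OF that] by (intro AE_sign_of_measure_half U_rv[OF that]) auto
  have H: "subgauss_bound \<Omega> (Hr k m) t \<and> subgauss_bound \<Omega> (Hi k m) t"
    if "k \<in> {1..K}" "m \<in> {1..M}" "\<sigma>F < t" for k m t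
    using H_sg[OF that(1,2)] H_mean[OF that(1,2)] H_tau[OF that(1,2)] that(3)
    by (auto intro: subgaussian_imp_subgauss_bound)
  have N: "subgauss_bound \<Omega> (Nr m) \<nu> \<and> subgauss_bound \<Omega> (Ni m) \<nu>" if "m \<in> {1..M}" "\<sigma>N < \<nu>" for m \<nu>
    using N_sg[OF that(1)] N_mean[OF that(1)] N_tau[OF that(1)] that(2)
    by (auto intro: subgaussian_imp_subgauss_bound)
  show ?thesis
  proof (intro conjI ballI allI impI)
    fix k m assume km: "k \<in> {1..K}" "m \<in> {1..M}"
    have "subexp_bound \<Omega> (\<lambda>x. (Hr k m x)\<^sup>2 - 1) (2 * \<sigma>F\<^sup>2)" "subexp_bound \<Omega> (\<lambda>x. (Hi k m x)\<^sup>2 - 1) (2 * \<sigma>F\<^sup>2)"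
      using subexp_bound_sq_centered_of_subgaussian[of "Hr k m" \<sigma>F] subexp_bound_sq_centered_of_subgaussian[of "Hi k m" \<sigma>F]
        H_sg[OF km] H_mean[OF km] H_var[OF km] H_tau[OF km] by simp_all
    then show "subexponential \<Omega> (\<lambda>x. (Hr k m x)\<^sup>2 - 1)" "subexponential \<Omega> (\<lambda>x. (Hi k m x)\<^sup>2 - 1)"
      "subexp_norm \<Omega> (\<lambda>x. (Hr k m x)\<^sup>2 - 1) \<le> ereal (2 * \<sigma>F\<^sup>2)"
      "subexp_norm \<Omega> (\<lambda>x. (Hi k m x)\<^sup>2 - 1) \<le> ereal (2 * \<sigma>F\<^sup>2)"
      by (simp_all add: subexp_bound_imp_subexponential subexp_bound_imp_subexp_norm_le)
  next
    fix s :: "nat \<Rightarrow> real" and m assume s: "\<forall>k\<in>{1..K}. s k \<in> S k" and m: "m \<in> {1..M}"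
    note X = Re_Nbar_centered_subexp_bound[OF indep m U[OF _ m] H[OF _ m] N[OF m] sF sN, of S f P s]
    have G: "(\<Sum>k=1..K. (sqrt (gfun K S f P k (f k (s k))))\<^sup>2) \<le> rel_spread K S f P"
      using s by (intro sum_sq_sqrt_gfun_le_rel_spread f_bdd Ppos Delta_pos) auto
    then have "sqrt (\<Sum>k=1..K. (sqrt (gfun K S f P k (f k (s k))))\<^sup>2) \<le> sqrt (rel_spread K S f P)" by simp
    with G have "subexp_bound \<Omega> (\<lambda>x. Re (Nbar K S f P Hr Hi Nr Ni U s m x)
        - (\<integral>x. Re (Nbar K S f P Hr Hi Nr Ni U s m x) \<partial>\<Omega>))
      (6 * \<sigma>F\<^sup>2 * rel_spread K S f P + 8 * \<sigma>N * \<sigma>F * sqrt (rel_spread K S f P) + 4 * \<sigma>N\<^sup>2)"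
      using sF sN by (intro subexp_bound_mono[OF X(2)] add_mono mult_left_mono) auto
    then show "let X = (\<lambda>x. Re (Nbar K S f P Hr Hi Nr Ni U s m x)) in subexponential \<Omega> X \<and>
        subexp_norm \<Omega> (\<lambda>x. X x - integral\<^sup>L \<Omega> X) \<le> ereal (6 * \<sigma>F\<^sup>2 * rel_spread K S f P
          + 8 * \<sigma>N * \<sigma>F * sqrt (rel_spread K S f P) + 4 * \<sigma>N\<^sup>2)"
      using X(1) by (simp add: Let_def subexp_bound_centered_imp_subexponential subexp_bound_imp_subexp_norm_le)
  qed
qed

end
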